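(* Let $\Gamma\subset\mathbb{R}^2\cong\mathbb{C}$ be a Jordan $\mathcal{C}^1$-curve and let $T$ be a non-flat triangle in the plane, with vertices $(A,B,C)$. Then there exist a translation $\tau$ and a homothety $\eta$ with positive ratio such that the three vertices $\eta\tau(A),\eta\tau(B),\eta\tau(C)$ all lie on $\Gamma$.
   Context: A Jordan $\mathcal{C}^1$-curve is a connected closed (compact, boundaryless) $\mathcal{C}^1$-submanifold of the plane; equivalently, the image of an injective $\mathcal{C}^1$-immersion of the unit circle $S^1$ into the plane. A triangle (ordered triple of points of the plane) is flat if its vertices are contained in a straight line. *)

theory Defs
  imports "HOL-Analysis.Analysis"
begin

text \<open>A Jordan C1-curve: the image of an injective C1-immersion of the unit circle
 into the plane (identified with the complex numbers).  The circle is parametrised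
 by t \<mapsto> exp(2 pi i t), so such an immersion is the same as a 1-periodic
 C1 map gamma on the reals with nowhere vanishing derivative that is injective on [0,1).\<close>
definition jordan_C1_curve :: "complex set \<Rightarrow> bool" where
  "jordan_C1_curve \<Gamma> \<longleftrightarrow>
     (\<exists>\<gamma> :: real \<Rightarrow> complex.
        \<gamma> C1_differentiable_on UNIV \<and>
        (\<forall>t. vector_derivative \<gamma> (at t) \<noteq> 0) \<and>
        (\<forall>t. \<gamma> (t + 1) = \<gamma> t) \<and>
        inj_on \<gamma> {0..<1} \<and>
        \<Gamma> = \<gamma> ` {0..1})"

definition translation :: "complex \<Rightarrow> complex \<Rightarrow> complex" where
  "translation v z = z + v"

definition homothety :: "complex \<Rightarrow> real \<Rightarrow> complex \<Rightarrow> complex" where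
  "homothety c r z = c + complex_of_real r * (z - c)"

end

theory Submission
  imports Defs
begin

(*
  Every non-degenerate triangle ABC is the image of the right isosceles triangle (-1, 1, i)
  under a real-affine bijection of the plane, and such maps send C1 Jordan curves to C1
  Jordan curves and positive homothetic copies of a triangle to positive homothetic copies
  of its image.  So it suffices to show that every C1 Jordan curve contains three points
  m - r, m + r, m + i r with r > 0: a horizontal chord whose apex (the third vertex of the
  right isosceles triangle erected upwards on it) also lies on the curve.

  To find such a chord, take a lowest point g(\<sigma>) and a highest point g(\<mu>) such that the
  arc between them meets the extreme heights only at its ends, and parametrise the two arcs
  from g(\<sigma>) to g(\<mu>) by [0,1].  Near a horizontal tangent the curve is a graph of slope
  less than one, so apexes of short horizontal chords lie just above the curve: inside it
  at the bottom, outside it at the top.  A Poincare-Miranda argument on the square of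
  parameter pairs at equal height yields a chord whose apex is neither inside nor outside
  the curve, hence on it.
*)


section \<open>Poincare-Miranda on the unit square and a crossing lemma\<close>

lemma IVT_opposite_signs:
  fixes f :: "real \<Rightarrow> real"
  assumes "a \<le> b" "continuous_on {a..b} f" "(f a - c) * (f b - c) \<le> 0"
  shows "\<exists>x\<in>{a..b}. f x = c"
proof -
  from assms(3) consider "f a \<le> c" "c \<le> f b" | "f b \<le> c" "c \<le> f a"
    by (auto simp: mult_le_0_iff)
  then show ?thesis
  proof cases
    case 1
    then show ?thesis using IVT'[of f a c b] assms(1,2) by auto
  next
    case 2
    then show ?thesis using IVT2'[of f b c a] assms(1,2) by auto
  qed
qed

definition clamp01 :: "real \<Rightarrow> real" where
  "clamp01 u = max 0 (min 1 u)"

lemma clamp01_fixed_point: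
  assumes "clamp01 (x - y) = x"
  shows "y = 0 \<or> (x = 0 \<and> 0 < y) \<or> (x = 1 \<and> y < 0)"
  using assms by (auto simp: clamp01_def max_def min_def split: if_splits)

lemma mem_unit_square:
  "z \<in> cbox (0::real,0::real) (1,1) \<longleftrightarrow> 0 \<le> fst z \<and> fst z \<le> 1 \<and> 0 \<le> snd z \<and> snd z \<le> 1"
  by (cases z) (auto simp: cbox_Pair_eq)

text \<open>The Poincare-Miranda theorem in dimension two, derived from Brouwer's fixed point
  theorem applied to (s,t) \<mapsto> (clamp01 (s - F1 (s,t)), clamp01 (t - F2 (s,t))).\<close>

lemma poincare_miranda_square:
  fixes F1 F2 :: "real \<times> real \<Rightarrow> real"
  assumes cont: "continuous_on (cbox (0,0) (1,1)) F1" "continuous_on (cbox (0,0) (1,1)) F2"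
    and left: "\<And>t. 0 \<le> t \<Longrightarrow> t \<le> 1 \<Longrightarrow> F1 (0,t) \<le> 0"
    and right: "\<And>t. 0 \<le> t \<Longrightarrow> t \<le> 1 \<Longrightarrow> F1 (1,t) \<ge> 0"
    and bottom: "\<And>s. 0 \<le> s \<Longrightarrow> s \<le> 1 \<Longrightarrow> F2 (s,0) \<le> 0"
    and top: "\<And>s. 0 \<le> s \<Longrightarrow> s \<le> 1 \<Longrightarrow> F2 (s,1) \<ge> 0"
  shows "\<exists>z\<in>cbox (0,0) (1,1). F1 z = 0 \<and> F2 z = 0"
proof -
  define G where "G z = (clamp01 (fst z - F1 z), clamp01 (snd z - F2 z))" for z
  have clamp: "continuous_on UNIV clamp01"
    unfolding clamp01_def by (intro continuous_intros)
  have "continuous_on (cbox (0,0) (1,1)) G"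
    unfolding G_def
    by (intro continuous_on_Pair continuous_on_compose2[OF clamp] continuous_intros cont) auto
  moreover have "G \<in> cbox (0,0) (1,1) \<rightarrow> cbox (0,0) (1,1)"
    by (auto simp: mem_unit_square G_def clamp01_def)
  moreover have "(0,0) \<in> cbox (0::real,0::real) (1,1)"
    by (simp add: mem_unit_square)
  ultimately obtain z where z: "z \<in> cbox (0,0) (1,1)" "G z = z"
    using brouwer[of "cbox (0::real,0::real) (1,1)" G] compact_cbox convex_box(1) by blast
  obtain s t where st: "z = (s, t)"
    by fastforce
  have "clamp01 (s - F1 (s,t)) = s" "clamp01 (t - F2 (s,t)) = t"
    using z(2) st by (auto simp: G_def)
  then have "F1 (s,t) = 0 \<or> (s = 0 \<and> 0 < F1 (s,t)) \<or> (s = 1 \<and> F1 (s,t) < 0)"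
    and "F2 (s,t) = 0 \<or> (t = 0 \<and> 0 < F2 (s,t)) \<or> (t = 1 \<and> F2 (s,t) < 0)"
    by (blast dest: clamp01_fixed_point)+
  then show ?thesis
    using z(1) st left[of t] right[of t] bottom[of s] top[of s] by (force simp: mem_unit_square)
qed

text \<open>If h \<le> 0 on the left and h \<ge> 0 on the right edge of the unit square, then the zero set of
  h cannot be split into two disjoint closed parts P and R, with P avoiding the top edge and
  R avoiding the bottom edge: otherwise Poincare-Miranda applied to h and the function
  infdist z (P \<union> bottom) - infdist z (R \<union> top) would give a zero of h in neither part.\<close>

lemma zero_set_connects_bottom_and_top:
  fixes h :: "real \<times> real \<Rightarrow> real"
  assumes cont: "continuous_on (cbox (0,0) (1,1)) h"
    and left: "\<And>t. 0 \<le> t \<Longrightarrow> t \<le> 1 \<Longrightarrow> h (0,t) \<le> 0"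
    and right: "\<And>t. 0 \<le> t \<Longrightarrow> t \<le> 1 \<Longrightarrow> h (1,t) \<ge> 0"
    and PR: "closed P" "closed R" "P \<inter> R = {}"
    and cover: "\<And>z. z \<in> cbox (0,0) (1,1) \<Longrightarrow> h z = 0 \<Longrightarrow> z \<in> P \<union> R"
    and P_top: "\<And>s. 0 \<le> s \<Longrightarrow> s \<le> 1 \<Longrightarrow> (s,1) \<notin> P"
    and R_bottom: "\<And>s. 0 \<le> s \<Longrightarrow> s \<le> 1 \<Longrightarrow> (s,0) \<notin> R"
  shows False
proof -
  define Bot where "Bot = cbox (0::real,0::real) (1,1) \<inter> snd -` {0}"
  define Top where "Top = cbox (0::real,0::real) (1,1) \<inter> snd -` {1}"
  have "closed Bot" "closed Top"
    unfolding Bot_def Top_def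
    by (intro continuous_closed_preimage continuous_on_snd[OF continuous_on_id] closed_cbox
          closed_singleton)+
  then have closed: "closed (P \<union> Bot)" "closed (R \<union> Top)"
    using PR by auto
  have "(0,0) \<in> Bot" "(1,1) \<in> Top"
    by (simp_all add: Bot_def Top_def mem_unit_square)
  then have nonempty: "P \<union> Bot \<noteq> {}" "R \<union> Top \<noteq> {}"
    by blast+
  have "z \<notin> P" if "z \<in> Top" for z
    using that P_top[of "fst z"] by (cases z) (auto simp: Top_def mem_unit_square)
  moreover have "z \<notin> R" if "z \<in> Bot" for z
    using that R_bottom[of "fst z"] by (cases z) (auto simp: Bot_def mem_unit_square)
  ultimately have "P \<inter> Top = {}" "R \<inter> Bot = {}"
    by blast+
  define \<phi> where "\<phi> z = infdist z (P \<union> Bot) - infdist z (R \<union> Top)" for z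
  have "continuous_on (cbox (0,0) (1,1)) \<phi>"
    unfolding \<phi>_def by (intro continuous_intros)
  moreover have "\<phi> (s,0) \<le> 0" "\<phi> (s,1) \<ge> 0" if "0 \<le> s" "s \<le> 1" for s
  proof -
    have "(s,0) \<in> Bot" "(s,1) \<in> Top"
      using that by (simp_all add: Bot_def Top_def mem_unit_square)
    then show "\<phi> (s,0) \<le> 0" "\<phi> (s,1) \<ge> 0"
      by (simp_all add: \<phi>_def infdist_nonneg)
  qed
  ultimately obtain z where z: "z \<in> cbox (0,0) (1,1)" "h z = 0" "\<phi> z = 0"
    using poincare_miranda_square[OF cont] left right by blast
  have same: "infdist z (P \<union> Bot) = infdist z (R \<union> Top)"
    using z(3) by (simp add: \<phi>_def)
  from cover[OF z(1,2)] consider "z \<in> P" | "z \<in> R"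
    by blast
  then show False
  proof cases
    case 1
    then have "z \<in> R \<union> Top"
      using same in_closed_iff_infdist_zero[OF closed(2) nonempty(2)] by simp
    then show False using 1 PR(3) \<open>P \<inter> Top = {}\<close> by blast
  next
    case 2
    then have "z \<in> P \<union> Bot"
      using same in_closed_iff_infdist_zero[OF closed(1) nonempty(1)] by simp
    then show False using 2 PR(3) \<open>R \<inter> Bot = {}\<close> by blast
  qed
qed

text \<open>Let h \<le> 0 on the left and h \<ge> 0 on the right
  edge of the unit square, with zero set Z meeting the bottom edge only at (0,0) and the
  top edge only at (1,1).  If a continuous F avoids E on Z near (0,0) and avoids I on Z
  near (1,1), where I and E are disjoint open sets, then F leaves I \<union> E somewhere on Z away
  from both corners: otherwise the points of Z where F avoids E, respectively I, would be
  two closed sets splitting Z as excluded by the previous lemma.\<close>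

lemma level_set_crossing:
  fixes h :: "real \<times> real \<Rightarrow> real" and F :: "real \<times> real \<Rightarrow> 'a::topological_space"
  defines "Q \<equiv> cbox (0::real,0::real) (1,1)"
  assumes cont: "continuous_on Q h" "continuous_on Q F"
    and IE: "open I" "open E" "I \<inter> E = {}"
    and \<delta>: "0 < \<delta>" "\<delta> \<le> 1/2"
    and left: "\<And>t. 0 \<le> t \<Longrightarrow> t \<le> 1 \<Longrightarrow> h (0,t) \<le> 0"
    and right: "\<And>t. 0 \<le> t \<Longrightarrow> t \<le> 1 \<Longrightarrow> h (1,t) \<ge> 0"
    and bottom: "\<And>s. 0 \<le> s \<Longrightarrow> s \<le> 1 \<Longrightarrow> h (s,0) = 0 \<Longrightarrow> s = 0"
    and top: "\<And>s. 0 \<le> s \<Longrightarrow> s \<le> 1 \<Longrightarrow> h (s,1) = 0 \<Longrightarrow> s = 1"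
    and near00: "\<And>z. z \<in> Q \<Longrightarrow> h z = 0 \<Longrightarrow> dist z (0,0) < \<delta> \<Longrightarrow> F z \<notin> E"
    and near11: "\<And>z. z \<in> Q \<Longrightarrow> h z = 0 \<Longrightarrow> dist z (1,1) < \<delta> \<Longrightarrow> F z \<notin> I"
  shows "\<exists>z\<in>Q. h z = 0 \<and> \<delta> \<le> dist z (0,0) \<and> \<delta> \<le> dist z (1,1) \<and> F z \<notin> I \<union> E"
proof (rule ccontr)
  assume none: "\<not> ?thesis"
  have "1 \<le> dist (0::real,0::real) (1,1)"
    using dist_fst_le[of "(0::real,0::real)" "(1,1)"] unfolding fst_conv by (simp add: dist_real_def)
  then have corners_apart: "1 \<le> dist z (0,0) + dist z (1,1)" for z :: "real \<times> real"
    using dist_triangle[of "(0::real,0::real)" "(1,1)" z] dist_commute[of z "(0,0)"] by linarith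
  define Z where "Z = Q \<inter> h -` {0}"
  define Zin where "Zin = Z \<inter> (Q \<inter> F -` (- E)) - ball (1,1) \<delta>"
  define Zout where "Zout = Z \<inter> (Q \<inter> F -` (- I)) - ball (0,0) \<delta>"
  have "closed Q"
    unfolding Q_def by (rule closed_cbox)
  have "closed Z"
    unfolding Z_def by (rule continuous_closed_preimage[OF cont(1) \<open>closed Q\<close> closed_singleton])
  have preimages: "closed (Q \<inter> F -` (- E))" "closed (Q \<inter> F -` (- I))"
    using continuous_closed_preimage[OF cont(2) \<open>closed Q\<close> closed_Compl[OF IE(2)]]
      continuous_closed_preimage[OF cont(2) \<open>closed Q\<close> closed_Compl[OF IE(1)]] by blast+
  have closed: "closed Zin" "closed Zout"
    unfolding Zin_def Zout_def by (intro closed_Diff closed_Int \<open>closed Z\<close> preimages open_ball)+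
  have disjoint: "Zin \<inter> Zout = {}"
    using none by (auto simp: Zin_def Zout_def Z_def mem_ball dist_commute not_less)
  have cover: "z \<in> Zin \<union> Zout" if z: "z \<in> Q" "h z = 0" for z
  proof -
    consider "dist z (0,0) < \<delta>" | "dist z (1,1) < \<delta>" | "\<delta> \<le> dist z (0,0)" "\<delta> \<le> dist z (1,1)"
      by linarith
    then show ?thesis
    proof cases
      case 1
      then have "\<delta> \<le> dist z (1,1)" using corners_apart[of z] \<delta> by linarith
      then show ?thesis using 1 near00[OF z] z by (simp add: Zin_def Z_def mem_ball dist_commute)
    next
      case 2
      then have "\<delta> \<le> dist z (0,0)" using corners_apart[of z] \<delta> by linarith
      then show ?thesis using 2 near11[OF z] z by (simp add: Zout_def Z_def mem_ball dist_commute)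
    next
      case 3
      then have "F z \<in> I \<or> F z \<in> E" using none z by blast
      then show ?thesis using 3 IE(3) z by (auto simp: Zin_def Zout_def Z_def mem_ball dist_commute)
    qed
  qed
  have Zin_top: "(s,1) \<notin> Zin" if "0 \<le> s" "s \<le> 1" for s
    using top[OF that] \<delta> by (auto simp: Zin_def Z_def)
  have Zout_bottom: "(s,0) \<notin> Zout" if "0 \<le> s" "s \<le> 1" for s
    using bottom[OF that] \<delta> by (auto simp: Zout_def Z_def)
  show False
    by (rule zero_set_connects_bottom_and_top[OF cont(1)[unfolded Q_def] left right closed disjoint
          cover[unfolded Q_def] Zin_top Zout_bottom])
qed

section \<open>Components of the complement of a set in the plane\<close>

lemma connected_inside_or_outside:
  assumes "connected C" "C \<inter> S = {}"
  shows "C \<subseteq> inside S \<or> C \<subseteq> outside S"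
proof (cases "C = {}")
  case False
  then obtain x where x: "x \<in> C" by blast
  have comp: "connected_component (- S) x y" if "y \<in> C" for y
    unfolding connected_component_def using assms x that by blast
  have "x \<in> inside S \<or> x \<in> outside S"
    using x assms(2) inside_Un_outside[of S] by blast
  then show ?thesis
    using comp inside_same_component outside_same_component by blast
qed simp

lemma unbounded_connected_outside:
  assumes "connected C" "\<not> bounded C" "C \<inter> S = {}" "x \<in> C"
  shows "x \<in> outside S"
proof -
  have "C \<subseteq> connected_component_set (- S) x"
    using assms by (intro connected_component_maximal) auto
  then show ?thesis
    using assms(2) bounded_subset outside by blast
qed

text \<open>Points strictly below, or strictly above, a set of complex numbers lie outside it;
  this is how the exterior of the curve is recognised near its lowest and highest points.\<close>

lemma below_outside:
  fixes S :: "complex set"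
  assumes "\<And>z. z \<in> S \<Longrightarrow> c \<le> Im z" "Im w < c"
  shows "w \<in> outside S"
proof (rule unbounded_connected_outside)
  show "\<not> bounded {z. c > Im z}"
  proof
    assume "bounded {z. c > Im z}"
    then obtain B where B: "\<And>z. c > Im z \<Longrightarrow> norm z \<le> B"
      unfolding bounded_iff by auto
    define X where "X = \<bar>B\<bar> + \<bar>c\<bar> + 1"
    have X: "B < X" "- X < c" "0 \<le> X"
      using abs_ge_self[of B] abs_ge_minus_self[of c] abs_ge_zero[of B] abs_ge_zero[of c]
      unfolding X_def by linarith+
    have "norm (- \<i> * of_real X) \<le> B"
      by (rule B) (use X in simp)
    moreover have "norm (- \<i> * of_real X) = X"
      using X by (simp add: norm_mult)
    ultimately show False
      using X by linarith
  qed
  show "connected {z. c > Im z}"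
    by (rule connected_halfspace_Im_lt)
  show "{z. c > Im z} \<inter> S = {}"
    using assms(1) by force
  show "w \<in> {z. c > Im z}"
    using assms(2) by simp
qed

lemma above_outside:
  fixes S :: "complex set"
  assumes "\<And>z. z \<in> S \<Longrightarrow> Im z \<le> c" "c < Im w"
  shows "w \<in> outside S"
proof (rule unbounded_connected_outside)
  show "\<not> bounded {z. c < Im z}"
  proof
    assume "bounded {z. c < Im z}"
    then obtain B where B: "\<And>z. c < Im z \<Longrightarrow> norm z \<le> B"
      unfolding bounded_iff by auto
    define X where "X = \<bar>B\<bar> + \<bar>c\<bar> + 1"
    have X: "B < X" "c < X" "0 \<le> X"
      using abs_ge_self[of B] abs_ge_self[of c] abs_ge_zero[of B] abs_ge_zero[of c]
      unfolding X_def by linarith+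
    have "norm (\<i> * of_real X) \<le> B"
      by (rule B) (use X in simp)
    moreover have "norm (\<i> * of_real X) = X"
      using X by (simp add: norm_mult)
    ultimately show False
      using X by linarith
  qed
  show "connected {z. c < Im z}"
    by (rule connected_halfspace_Im_gt)
  show "{z. c < Im z} \<inter> S = {}"
    using assms(1) by force
  show "w \<in> {z. c < Im z}"
    using assms(2) by simp
qed


text \<open>The apex of the segment [w1, w2]: the third vertex of the right isosceles triangle
  erected upwards on it when the segment is horizontal.\<close>

definition apex :: "complex \<Rightarrow> complex \<Rightarrow> complex" where
  "apex w1 w2 = (w1 + w2) / 2 + \<i> * of_real (\<bar>Re w1 - Re w2\<bar> / 2)"

lemma apex_commute: "apex w1 w2 = apex w2 w1"
  unfolding apex_def by (simp add: abs_minus_commute add.commute)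

lemma apex_same [simp]: "apex w w = w"
  unfolding apex_def by (simp add: complex_eq_iff)

lemma apex_right_isosceles:
  assumes "Im w1 = Im w2" "w1 \<noteq> w2"
  obtains m r where "0 < r" "{m - of_real r, m + of_real r} = {w1, w2}" "apex w1 w2 = m + \<i> * of_real r"
proof -
  define m where "m = (w1 + w2) / 2"
  define r where "r = \<bar>Re w1 - Re w2\<bar> / 2"
  have "0 < r"
    using assms by (auto simp: r_def complex_eq_iff)
  moreover have "{m - of_real r, m + of_real r} = {w1, w2}"
    using assms(1) by (cases "Re w1 \<le> Re w2") (auto simp: m_def r_def complex_eq_iff field_simps)
  moreover have "apex w1 w2 = m + \<i> * of_real r"
    by (simp add: apex_def m_def r_def)
  ultimately show thesis
    by (rule that)
qed


text \<open>For \<sigma> < \<mu> < \<sigma> + 1, as s and t run through [0,1], up_arc runs from \<sigma> up to \<mu> and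
  down_arc from \<sigma> down to \<mu> - 1; together they sweep out the period [\<mu> - 1, \<mu>].\<close>

definition up_arc :: "real \<Rightarrow> real \<Rightarrow> real \<Rightarrow> real" where
  "up_arc \<sigma> \<mu> s = \<sigma> + s * (\<mu> - \<sigma>)"

definition down_arc :: "real \<Rightarrow> real \<Rightarrow> real \<Rightarrow> real" where
  "down_arc \<sigma> \<mu> t = \<sigma> - t * (\<sigma> + 1 - \<mu>)"

lemma up_arc_ends:
  assumes "\<sigma> < \<mu>"
  shows "up_arc \<sigma> \<mu> s = \<sigma> \<longleftrightarrow> s = 0" "up_arc \<sigma> \<mu> s = \<mu> \<longleftrightarrow> s = 1"
proof -
  have "up_arc \<sigma> \<mu> s - \<sigma> = s * (\<mu> - \<sigma>)" "up_arc \<sigma> \<mu> s - \<mu> = (s - 1) * (\<mu> - \<sigma>)"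
    by (simp_all add: up_arc_def algebra_simps)
  then show "up_arc \<sigma> \<mu> s = \<sigma> \<longleftrightarrow> s = 0" "up_arc \<sigma> \<mu> s = \<mu> \<longleftrightarrow> s = 1"
    using assms by (smt (verit) mult_eq_0_iff)+
qed

lemma down_arc_ends:
  assumes "\<mu> < \<sigma> + 1"
  shows "down_arc \<sigma> \<mu> t = \<sigma> \<longleftrightarrow> t = 0" "down_arc \<sigma> \<mu> t = \<mu> - 1 \<longleftrightarrow> t = 1"
proof -
  have "down_arc \<sigma> \<mu> t - \<sigma> = - (t * (\<sigma> + 1 - \<mu>))"
    "down_arc \<sigma> \<mu> t - (\<mu> - 1) = (1 - t) * (\<sigma> + 1 - \<mu>)"
    by (simp_all add: down_arc_def algebra_simps)
  then show "down_arc \<sigma> \<mu> t = \<sigma> \<longleftrightarrow> t = 0" "down_arc \<sigma> \<mu> t = \<mu> - 1 \<longleftrightarrow> t = 1"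
    using assms by (smt (verit) mult_eq_0_iff)+
qed

lemma up_arc_bounds:
  assumes "\<sigma> < \<mu>" "\<mu> < \<sigma> + 1" "0 \<le> s" "s \<le> 1"
  shows "\<sigma> \<le> up_arc \<sigma> \<mu> s \<and> up_arc \<sigma> \<mu> s \<le> \<mu> \<and>
    \<bar>up_arc \<sigma> \<mu> s - \<sigma>\<bar> \<le> s \<and> \<bar>up_arc \<sigma> \<mu> s - \<mu>\<bar> \<le> 1 - s"
proof -
  define X Y where "X = s * (\<mu> - \<sigma>)" and "Y = (1 - s) * (\<mu> - \<sigma>)"
  have "0 \<le> X" "X \<le> s" "0 \<le> Y" "Y \<le> 1 - s"
    using assms mult_left_le[of "\<mu> - \<sigma>" s] mult_left_le[of "\<mu> - \<sigma>" "1 - s"]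
    unfolding X_def Y_def by simp_all
  moreover have "up_arc \<sigma> \<mu> s - \<sigma> = X" "up_arc \<sigma> \<mu> s - \<mu> = - Y"
    unfolding X_def Y_def up_arc_def by (simp_all add: algebra_simps)
  ultimately show ?thesis
    unfolding abs_le_iff by linarith
qed

lemma down_arc_bounds:
  assumes "\<sigma> < \<mu>" "\<mu> < \<sigma> + 1" "0 \<le> t" "t \<le> 1"
  shows "\<mu> - 1 \<le> down_arc \<sigma> \<mu> t \<and> down_arc \<sigma> \<mu> t \<le> \<sigma> \<and>
    \<bar>down_arc \<sigma> \<mu> t - \<sigma>\<bar> \<le> t \<and> \<bar>down_arc \<sigma> \<mu> t + 1 - \<mu>\<bar> \<le> 1 - t"
proof -
  define X Y where "X = t * (\<sigma> + 1 - \<mu>)" and "Y = (1 - t) * (\<sigma> + 1 - \<mu>)"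
  have "0 \<le> X" "X \<le> t" "0 \<le> Y" "Y \<le> 1 - t"
    using assms mult_left_le[of "\<sigma> + 1 - \<mu>" t] mult_left_le[of "\<sigma> + 1 - \<mu>" "1 - t"]
    unfolding X_def Y_def by simp_all
  moreover have "down_arc \<sigma> \<mu> t - \<sigma> = - X" "down_arc \<sigma> \<mu> t + 1 - \<mu> = Y"
    unfolding X_def Y_def down_arc_def by (simp_all add: algebra_simps)
  ultimately show ?thesis
    unfolding abs_le_iff by linarith
qed


section \<open>Periodic C1 immersions that are injective on a period\<close>

locale jcurve =
  fixes g :: "real \<Rightarrow> complex" and g' :: "real \<Rightarrow> complex"
  assumes has_deriv: "\<And>t. (g has_vector_derivative g' t) (at t)"
    and cont_deriv: "continuous_on UNIV g'"
    and deriv_nonzero: "\<And>t. g' t \<noteq> 0"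
    and periodic: "\<And>t. g (t + 1) = g t"
    and inj_unit_period: "inj_on g {0..<1}"
begin

lemma isCont_g: "isCont g t"
  using has_deriv has_vector_derivative_continuous by blast

lemma continuous_on_g: "continuous_on S g"
  by (simp add: continuous_at_imp_continuous_on isCont_g)

lemma isCont_deriv: "isCont g' t"
  using cont_deriv by (simp add: continuous_on_eq_continuous_at)

lemma DERIV_Re_g: "((\<lambda>t. Re (g t)) has_real_derivative Re (g' t)) (at t)"
  using has_field_derivative_Re[OF has_deriv] .

lemma DERIV_Im_g: "((\<lambda>t. Im (g t)) has_real_derivative Im (g' t)) (at t)"
  using has_field_derivative_Im[OF has_deriv] .

lemma isCont_Re_g: "isCont (\<lambda>t. Re (g t)) t"
  using DERIV_isCont[OF DERIV_Re_g] .

lemma isCont_Im_g: "isCont (\<lambda>t. Im (g t)) t"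
  using DERIV_isCont[OF DERIV_Im_g] .

lemma continuous_on_Re_g: "continuous_on S (\<lambda>t. Re (g t))"
  by (simp add: continuous_at_imp_continuous_on isCont_Re_g)

lemma continuous_on_Im_g: "continuous_on S (\<lambda>t. Im (g t))"
  by (simp add: continuous_at_imp_continuous_on isCont_Im_g)

lemma periodic_int: "g (t + of_int k) = g t"
proof (induction k rule: int_induct[where k = 0])
  case (step1 i)
  then show ?case using periodic[of "t + of_int i"] by (simp add: add.assoc)
next
  case (step2 i)
  then show ?case using periodic[of "t + of_int (i - 1)"] by (simp add: algebra_simps)
qed simp

lemma shift_into_period:
  obtains t' where "a \<le> t'" "t' < a + 1" "g t' = g t"
proof
  define k where "k = \<lfloor>t - a\<rfloor>"
  show "a \<le> t - of_int k" "t - of_int k < a + 1"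
    using of_int_floor_le[of "t - a"] real_of_int_floor_add_one_gt[of "t - a"] unfolding k_def
    by linarith+
  show "g (t - of_int k) = g t"
    using periodic_int[of t "- k"] by simp
qed

lemma inj_on_period: "inj_on g {a..<a + 1}"
proof (rule inj_onI)
  fix t1 t2 assume t: "t1 \<in> {a..<a + 1}" "t2 \<in> {a..<a + 1}" and eq: "g t1 = g t2"
  define f where "f t = t - of_int \<lfloor>t\<rfloor>" for t :: real
  have "g (f t) = g t" for t
    using periodic_int[of t "- \<lfloor>t\<rfloor>"] by (simp add: f_def)
  moreover have "f t \<in> {0..<1}" for t
    using of_int_floor_le[of t] real_of_int_floor_add_one_gt[of t] unfolding f_def atLeastLessThan_iff
    by linarith
  ultimately have "f t1 = f t2"
    using inj_unit_period eq by (metis inj_onD)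
  then have diff: "t1 - t2 = of_int (\<lfloor>t1\<rfloor> - \<lfloor>t2\<rfloor>)"
    by (simp add: f_def)
  moreover have "\<bar>t1 - t2\<bar> < 1"
    using t by auto
  ultimately have "\<bar>\<lfloor>t1\<rfloor> - \<lfloor>t2\<rfloor>\<bar> < 1"
    by (metis of_int_abs of_int_less_1_iff)
  then have "\<lfloor>t1\<rfloor> = \<lfloor>t2\<rfloor>"
    unfolding abs_less_iff by linarith
  then show "t1 = t2"
    using diff by simp
qed

lemma range_eq: "g ` {a..a + 1} = range g"
proof
  show "range g \<subseteq> g ` {a..a + 1}"
  proof
    fix z assume "z \<in> range g"
    then obtain t where "z = g t" by auto
    then obtain t' where "a \<le> t'" "t' < a + 1" "g t' = z"
      using shift_into_period by metis
    then show "z \<in> g ` {a..a + 1}" by force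
  qed
qed auto

lemma simple_path_g: "simple_path g"
  unfolding simple_path_def loop_free_def path_def
proof (intro conjI continuous_on_g ballI impI)
  fix x y :: real assume x: "x \<in> {0..1}" and y: "y \<in> {0..1}" and eq: "g x = g y"
  define r where "r u = (if u = 1 then 0 else u)" for u :: real
  have "g (r u) = g u" for u
    using periodic[of 0] by (simp add: r_def)
  moreover have "r u \<in> {0..<1}" if "u \<in> {0..1}" for u
    using that by (auto simp: r_def)
  ultimately have "r x = r y"
    using inj_unit_period eq x y by (metis inj_onD)
  then show "x = y \<or> x = 0 \<and> y = 1 \<or> x = 1 \<and> y = 0"
    using x y by (auto simp: r_def split: if_splits)
qed

lemma jordan_curve:
  "open (inside (range g))" "open (outside (range g))" "frontier (inside (range g)) = range g"
proof -
  have "path_image g = range g"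
    unfolding path_image_def using range_eq[of 0] by simp
  moreover have "pathfinish g = pathstart g"
    using periodic[of 0] by (simp add: pathfinish_def pathstart_def)
  ultimately show "open (inside (range g))" "open (outside (range g))"
      "frontier (inside (range g)) = range g"
    using Jordan_inside_outside[OF simple_path_g] by auto
qed

lemma curve_isolation:
  assumes "0 < d"
  obtains \<rho> where "0 < \<rho>" "\<And>w. w \<in> range g \<Longrightarrow> cmod (w - g \<sigma>) < \<rho> \<Longrightarrow> \<exists>\<tau>. \<bar>\<tau> - \<sigma>\<bar> < d \<and> w = g \<tau>"
proof -
  define d' where "d' = min d (1/4)"
  have d': "0 < d'" "d' \<le> d" "d' \<le> 1/4"
    using assms by (auto simp: d'_def)
  define K where "K = g ` ({\<sigma> - 1/2..\<sigma> - d'} \<union> {\<sigma> + d'..\<sigma> + 1/2})"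
  have K: "compact K" "K \<noteq> {}"
    unfolding K_def using d' by (auto intro!: compact_continuous_image continuous_on_g)
  have "g \<sigma> \<notin> K"
  proof
    assume "g \<sigma> \<in> K"
    then obtain t where t: "t \<in> {\<sigma> - 1/2..\<sigma> - d'} \<union> {\<sigma> + d'..\<sigma> + 1/2}" "g t = g \<sigma>"
      unfolding K_def by (metis imageE)
    define t' where "t' = (if t = \<sigma> + 1/2 then \<sigma> - 1/2 else t)"
    have "g (\<sigma> + 1/2) = g (\<sigma> - 1/2)"
      using periodic[of "\<sigma> - 1/2"] by (simp add: field_simps)
    then have "g t' = g \<sigma>"
      using t(2) by (auto simp: t'_def)
    moreover have "t' \<in> {\<sigma> - 1/2..<\<sigma> - 1/2 + 1}" "\<sigma> \<in> {\<sigma> - 1/2..<\<sigma> - 1/2 + 1}"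
      using t(1) d' by (auto simp: t'_def)
    ultimately have "t' = \<sigma>"
      using inj_onD[OF inj_on_period] by metis
    then show False
      using t(1) d' by (auto simp: t'_def split: if_splits)
  qed
  then have \<rho>: "0 < infdist (g \<sigma>) K"
    using infdist_pos_not_in_closed[OF compact_imp_closed] K by blast
  show thesis
  proof (rule that[OF \<rho>])
    fix w assume w: "w \<in> range g" "cmod (w - g \<sigma>) < infdist (g \<sigma>) K"
    have "w \<in> g ` {\<sigma> - 1/2..\<sigma> - 1/2 + 1}"
      using w(1) range_eq[of "\<sigma> - 1/2"] by simp
    then obtain t where t: "t \<in> {\<sigma> - 1/2..\<sigma> - 1/2 + 1}" "w = g t"
      by blast
    have "w \<notin> K"
      using w(2) infdist_le[of w K "g \<sigma>"] by (auto simp: dist_norm norm_minus_commute)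
    then have "t \<notin> {\<sigma> - 1/2..\<sigma> - d'} \<union> {\<sigma> + d'..\<sigma> + 1/2}"
      using t(2) by (auto simp: K_def)
    then have "\<bar>t - \<sigma>\<bar> < d'"
      using t(1) by (auto simp: abs_less_iff)
    then have "\<bar>t - \<sigma>\<bar> < d"
      using d' by linarith
    then show "\<exists>\<tau>. \<bar>\<tau> - \<sigma>\<bar> < d \<and> w = g \<tau>"
      using t(2) by blast
  qed
qed


section \<open>Local structure of the curve at a horizontal tangent\<close>

definition vstrip :: "real \<Rightarrow> real \<Rightarrow> real set \<Rightarrow> complex set" where
  "vstrip \<sigma> \<delta> V = (\<lambda>(\<tau>, v). g \<tau> + \<i> * of_real v) ` ({\<sigma> - \<delta><..<\<sigma> + \<delta>} \<times> V)"

lemma vstrip_iff: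
  "z \<in> vstrip \<sigma> \<delta> V \<longleftrightarrow> (\<exists>\<tau> v. \<bar>\<tau> - \<sigma>\<bar> < \<delta> \<and> v \<in> V \<and> z = g \<tau> + \<i> * of_real v)"
  unfolding vstrip_def by (force simp: abs_less_iff)

lemma vstrip_mono: "V \<subseteq> W \<Longrightarrow> vstrip \<sigma> \<delta> V \<subseteq> vstrip \<sigma> \<delta> W"
  unfolding vstrip_def by blast

lemma vstrip_Un: "vstrip \<sigma> \<delta> (V \<union> W) = vstrip \<sigma> \<delta> V \<union> vstrip \<sigma> \<delta> W"
  unfolding vstrip_def by auto

lemma connected_vstrip:
  assumes "convex V"
  shows "connected (vstrip \<sigma> \<delta> V)"
proof -
  have "continuous_on UNIV (\<lambda>p::real \<times> real. g (fst p) + \<i> * of_real (snd p))"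
    by (intro continuous_intros continuous_on_compose2[OF continuous_on_g[of UNIV]]) auto
  then show ?thesis
    unfolding vstrip_def case_prod_unfold
    by (intro connected_continuous_image convex_connected convex_Times convex_real_interval assms)
      (auto intro: continuous_on_subset)
qed

lemma horizontal_tangent_cone:
  assumes "Im (g' \<sigma>) = 0"
  obtains \<delta>0 k e where "0 < \<delta>0" "0 < k" "\<bar>e\<bar> = 1"
    "\<And>t. \<bar>t - \<sigma>\<bar> < \<delta>0 \<Longrightarrow> \<bar>Im (g' t)\<bar> < k \<and> k < e * Re (g' t)"
proof -
  define e where "e = sgn (Re (g' \<sigma>))"
  define k where "k = \<bar>Re (g' \<sigma>)\<bar> / 2"
  have "Re (g' \<sigma>) \<noteq> 0"
    using deriv_nonzero[of \<sigma>] assms by (auto simp: complex_eq_iff)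
  then have k: "0 < k" and e: "\<bar>e\<bar> = 1" and ek: "e * Re (g' \<sigma>) = 2 * k"
    by (auto simp: k_def e_def sgn_if)
  obtain \<delta>0 where \<delta>0: "0 < \<delta>0" and near: "\<And>t. dist t \<sigma> < \<delta>0 \<Longrightarrow> dist (g' t) (g' \<sigma>) < k"
    using isCont_deriv[of \<sigma>] k unfolding continuous_at_eps_delta by blast
  show thesis
  proof (rule that[OF \<delta>0 k e])
    fix t assume "\<bar>t - \<sigma>\<bar> < \<delta>0"
    then have close: "cmod (g' t - g' \<sigma>) < k"
      using near by (simp add: dist_norm dist_real_def)
    have "\<bar>e * Re (g' t) - e * Re (g' \<sigma>)\<bar> = \<bar>Re (g' t - g' \<sigma>)\<bar>"
      using e by (simp add: abs_mult flip: right_diff_distrib)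
    then have "\<bar>e * Re (g' t) - e * Re (g' \<sigma>)\<bar> < k"
      using abs_Re_le_cmod[of "g' t - g' \<sigma>"] close by linarith
    moreover have "\<bar>Im (g' t)\<bar> < k"
      using abs_Im_le_cmod[of "g' t - g' \<sigma>"] close assms by simp
    ultimately show "\<bar>Im (g' t)\<bar> < k \<and> k < e * Re (g' t)"
      using ek unfolding abs_less_iff by linarith
  qed
qed

context
  fixes \<sigma> \<delta>0 k e :: real
  assumes \<delta>0: "0 < \<delta>0" and k: "0 < k" and e: "\<bar>e\<bar> = 1"
    and cone: "\<And>t. \<bar>t - \<sigma>\<bar> < \<delta>0 \<Longrightarrow> \<bar>Im (g' t)\<bar> < k \<and> k < e * Re (g' t)"
begin

lemma Re_increment:
  assumes "\<bar>a - \<sigma>\<bar> < \<delta>0" "\<bar>b - \<sigma>\<bar> < \<delta>0" "a < b"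
  shows "k * (b - a) < e * (Re (g b) - Re (g a))"
proof -
  obtain \<xi> where \<xi>: "a < \<xi>" "\<xi> < b" and mvt: "Re (g b) - Re (g a) = (b - a) * Re (g' \<xi>)"
    using MVT2[OF \<open>a < b\<close>, of "\<lambda>t. Re (g t)" "\<lambda>t. Re (g' t)"] DERIV_Re_g by blast
  have "\<bar>\<xi> - \<sigma>\<bar> < \<delta>0"
    using \<xi> assms by auto
  then have "(b - a) * k < (b - a) * (e * Re (g' \<xi>))"
    using cone \<open>a < b\<close> by (intro mult_strict_left_mono) auto
  then show ?thesis
    unfolding mvt by (simp add: algebra_simps)
qed

lemma Re_inj:
  assumes "\<bar>a - \<sigma>\<bar> < \<delta>0" "\<bar>b - \<sigma>\<bar> < \<delta>0" "Re (g a) = Re (g b)"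
  shows "a = b"
proof (rule ccontr)
  assume "a \<noteq> b"
  then consider "a < b" | "b < a" by linarith
  then show False
  proof cases
    case 1
    then show False using Re_increment[OF assms(1,2) 1] assms(3) k by (simp add: mult_less_0_iff)
  next
    case 2
    then show False using Re_increment[OF assms(2,1) 2] assms(3) k by (simp add: mult_less_0_iff)
  qed
qed

lemma chord_slope:
  assumes "\<bar>a - \<sigma>\<bar> < \<delta>0" "\<bar>b - \<sigma>\<bar> < \<delta>0" "a < b"
  shows "\<bar>Im (g b) - Im (g a)\<bar> < \<bar>Re (g b) - Re (g a)\<bar>"
proof -
  obtain \<xi> where \<xi>: "a < \<xi>" "\<xi> < b"
    and eq: "(Re (g b) - Re (g a)) * Im (g' \<xi>) = (Im (g b) - Im (g a)) * Re (g' \<xi>)"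
    using GMVT'[OF \<open>a < b\<close>, of "\<lambda>t. Re (g t)" "\<lambda>t. Im (g t)" "\<lambda>t. Im (g' t)" "\<lambda>t. Re (g' t)"]
      isCont_Re_g isCont_Im_g DERIV_Re_g DERIV_Im_g by blast
  have "\<bar>\<xi> - \<sigma>\<bar> < \<delta>0"
    using \<xi> assms by auto
  then have "\<bar>Im (g' \<xi>)\<bar> < k" "k < e * Re (g' \<xi>)"
    using cone by blast+
  moreover have "e * Re (g' \<xi>) \<le> \<bar>Re (g' \<xi>)\<bar>"
    using e abs_ge_self[of "e * Re (g' \<xi>)"] by (simp add: abs_mult)
  ultimately have slope: "\<bar>Im (g' \<xi>)\<bar> < \<bar>Re (g' \<xi>)\<bar>"
    by linarith
  have "Re (g b) \<noteq> Re (g a)"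
    using Re_inj[OF assms(1,2)] assms(3) by force
  have "\<bar>Im (g b) - Im (g a)\<bar> * \<bar>Re (g' \<xi>)\<bar> = \<bar>Re (g b) - Re (g a)\<bar> * \<bar>Im (g' \<xi>)\<bar>"
    using arg_cong[OF eq, of abs] by (simp add: abs_mult)
  also have "\<dots> < \<bar>Re (g b) - Re (g a)\<bar> * \<bar>Re (g' \<xi>)\<bar>"
    using slope \<open>Re (g b) \<noteq> Re (g a)\<close> by (intro mult_strict_left_mono) auto
  finally show ?thesis
    by (simp add: mult_less_cancel_right)
qed

lemma vertical_segments_free:
  assumes \<delta>: "\<delta> \<le> \<delta>0" and close: "\<And>\<tau>. \<bar>\<tau> - \<sigma>\<bar> < \<delta> \<Longrightarrow> cmod (g \<tau> - g \<sigma>) < \<eta> / 2"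
    and iso: "\<And>w. w \<in> range g \<Longrightarrow> cmod (w - g \<sigma>) < 2 * \<eta> \<Longrightarrow> \<exists>\<tau>. \<bar>\<tau> - \<sigma>\<bar> < \<delta>0 \<and> w = g \<tau>"
  shows "vstrip \<sigma> \<delta> ({-\<eta><..<\<eta>} - {0}) \<inter> range g = {}"
proof -
  have free: "g \<tau> + \<i> * of_real v \<notin> range g" if \<tau>: "\<bar>\<tau> - \<sigma>\<bar> < \<delta>" and v: "v \<noteq> 0" "\<bar>v\<bar> < \<eta>" for \<tau> v
  proof
    assume on: "g \<tau> + \<i> * of_real v \<in> range g"
    have "cmod (g \<tau> + \<i> * of_real v - g \<sigma>) = cmod ((g \<tau> - g \<sigma>) + \<i> * of_real v)"
      by (simp add: algebra_simps)
    also have "\<dots> \<le> cmod (g \<tau> - g \<sigma>) + cmod (\<i> * of_real v)"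
      by (rule norm_triangle_ineq)
    also have "cmod (\<i> * of_real v) = \<bar>v\<bar>"
      by (simp add: norm_mult)
    also have "cmod (g \<tau> - g \<sigma>) + \<bar>v\<bar> < 2 * \<eta>"
      using close[OF \<tau>] v by linarith
    finally obtain \<tau>' where \<tau>': "\<bar>\<tau>' - \<sigma>\<bar> < \<delta>0" "g \<tau> + \<i> * of_real v = g \<tau>'"
      using iso on by blast
    have "Re (g \<tau>') = Re (g \<tau>)"
      using arg_cong[OF \<tau>'(2), of Re] by simp
    moreover have "\<bar>\<tau> - \<sigma>\<bar> < \<delta>0"
      using \<tau> \<delta> by simp
    ultimately have "\<tau>' = \<tau>"
      using Re_inj \<tau>'(1) by blast
    then show False
      using \<tau>'(2) v by simp
  qed
  show ?thesis
  proof (rule equals0I)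
    fix z assume z: "z \<in> vstrip \<sigma> \<delta> ({-\<eta><..<\<eta>} - {0}) \<inter> range g"
    then obtain \<tau> v where "\<bar>\<tau> - \<sigma>\<bar> < \<delta>" "v \<in> {-\<eta><..<\<eta>} - {0}" "z = g \<tau> + \<i> * of_real v"
      unfolding Int_iff vstrip_iff by blast
    then show False
      using free[of \<tau> v] z by (auto simp: abs_less_iff)
  qed
qed

text \<open>Values of the real part close to Re g(\<sigma>) are attained near \<sigma>, since Re g increases
  (or decreases) with speed at least k there.\<close>

lemma Re_attains_near:
  assumes \<delta>: "0 < \<delta>" "\<delta> \<le> \<delta>0" and x: "\<bar>x - Re (g \<sigma>)\<bar> < k * \<delta> / 4"
  obtains \<tau> where "\<bar>\<tau> - \<sigma>\<bar> < \<delta>" "Re (g \<tau>) = x"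
proof -
  have near: "\<bar>\<sigma> - \<delta>/2 - \<sigma>\<bar> < \<delta>0" "\<bar>\<sigma> - \<sigma>\<bar> < \<delta>0" "\<bar>\<sigma> + \<delta>/2 - \<sigma>\<bar> < \<delta>0"
    using \<delta> by auto
  have "k * (\<delta>/2) < e * Re (g \<sigma>) - e * Re (g (\<sigma> - \<delta>/2))"
    using Re_increment[OF near(1,2)] \<delta> by (simp add: right_diff_distrib)
  moreover have "k * (\<delta>/2) < e * Re (g (\<sigma> + \<delta>/2)) - e * Re (g \<sigma>)"
    using Re_increment[OF near(2,3)] \<delta> by (simp add: right_diff_distrib)
  moreover have "k * \<delta> / 4 < k * (\<delta>/2)"
    using k \<delta> by simp
  moreover have "\<bar>e * x - e * Re (g \<sigma>)\<bar> < k * \<delta> / 4"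
    using x e by (simp add: abs_mult flip: right_diff_distrib)
  ultimately have "e * (Re (g (\<sigma> - \<delta>/2)) - x) < 0" "0 < e * (Re (g (\<sigma> + \<delta>/2)) - x)"
    unfolding right_diff_distrib abs_less_iff by linarith+
  then have "(e * (Re (g (\<sigma> - \<delta>/2)) - x)) * (e * (Re (g (\<sigma> + \<delta>/2)) - x)) < 0"
    by (rule mult_neg_pos)
  then have "(e * e) * ((Re (g (\<sigma> - \<delta>/2)) - x) * (Re (g (\<sigma> + \<delta>/2)) - x)) < 0"
    by (simp add: mult_ac)
  moreover have "e * e = 1"
    using e abs_mult_self_eq[of e] by simp
  ultimately have "(Re (g (\<sigma> - \<delta>/2)) - x) * (Re (g (\<sigma> + \<delta>/2)) - x) \<le> 0"
    by simp
  then obtain \<tau> where "\<tau> \<in> {\<sigma> - \<delta>/2..\<sigma> + \<delta>/2}" "Re (g \<tau>) = x"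
    using IVT_opposite_signs[of "\<sigma> - \<delta>/2" "\<sigma> + \<delta>/2" "\<lambda>t. Re (g t)" x] \<delta> continuous_on_Re_g
    by auto
  moreover have "\<bar>\<tau> - \<sigma>\<bar> < \<delta>" if "\<tau> \<in> {\<sigma> - \<delta>/2..\<sigma> + \<delta>/2}" for \<tau>
    using that \<delta> by (auto simp: abs_less_iff)
  ultimately show thesis
    using that by blast
qed

lemma disc_covered:
  assumes \<delta>: "0 < \<delta>" "\<delta> \<le> \<delta>0" and close: "\<And>\<tau>. \<bar>\<tau> - \<sigma>\<bar> < \<delta> \<Longrightarrow> cmod (g \<tau> - g \<sigma>) < \<eta> / 2"
    and \<kappa>: "\<kappa> \<le> k * \<delta> / 4" "\<kappa> \<le> \<eta> / 2"
  shows "ball (g \<sigma>) \<kappa> \<subseteq> range g \<union> vstrip \<sigma> \<delta> ({-\<eta><..<\<eta>} - {0})"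
proof
  fix z assume "z \<in> ball (g \<sigma>) \<kappa>"
  then have "cmod (z - g \<sigma>) < \<kappa>"
    by (simp add: dist_norm norm_minus_commute)
  then have "\<bar>Re z - Re (g \<sigma>)\<bar> < k * \<delta> / 4" and im: "\<bar>Im z - Im (g \<sigma>)\<bar> < \<eta> / 2"
    using abs_Re_le_cmod[of "z - g \<sigma>"] abs_Im_le_cmod[of "z - g \<sigma>"] \<kappa>
    unfolding minus_complex.sel by linarith+
  then obtain \<tau> where \<tau>: "\<bar>\<tau> - \<sigma>\<bar> < \<delta>" "Re (g \<tau>) = Re z"
    using Re_attains_near[OF \<delta>] by blast
  define v where "v = Im z - Im (g \<tau>)"
  have "\<bar>Im (g \<tau>) - Im (g \<sigma>)\<bar> < \<eta> / 2"
    using abs_Im_le_cmod[of "g \<tau> - g \<sigma>"] close[OF \<tau>(1)] unfolding minus_complex.sel by linarith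
  then have v: "v \<in> {-\<eta><..<\<eta>}"
    using im unfolding v_def abs_less_iff greaterThanLessThan_iff by linarith
  have z: "z = g \<tau> + \<i> * of_real v"
    using \<tau>(2) by (simp add: v_def complex_eq_iff)
  show "z \<in> range g \<union> vstrip \<sigma> \<delta> ({-\<eta><..<\<eta>} - {0})"
  proof (cases "v = 0")
    case True
    then show ?thesis using z by simp
  next
    case False
    then have "z \<in> vstrip \<sigma> \<delta> ({-\<eta><..<\<eta>} - {0})"
      using z v \<tau>(1) unfolding vstrip_iff by blast
    then show ?thesis by blast
  qed
qed

text \<open>Third, since chords have slope less than one, the apex of a horizontal chord lies on a
  short vertical segment above the curve.\<close>

lemma chord_apex_above:
  assumes \<delta>: "\<delta> \<le> \<delta>0" and close: "\<And>\<tau>. \<bar>\<tau> - \<sigma>\<bar> < \<delta> \<Longrightarrow> cmod (g \<tau> - g \<sigma>) < \<eta> / 2"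
    and \<tau>: "\<bar>\<tau>1 - \<sigma>\<bar> < \<delta>" "\<bar>\<tau>2 - \<sigma>\<bar> < \<delta>" "\<tau>1 < \<tau>2" and level: "Im (g \<tau>1) = Im (g \<tau>2)"
  shows "apex (g \<tau>1) (g \<tau>2) \<in> vstrip \<sigma> \<delta> {0<..<\<eta>}"
proof -
  define m where "m = (Re (g \<tau>1) + Re (g \<tau>2)) / 2"
  define r where "r = \<bar>Re (g \<tau>1) - Re (g \<tau>2)\<bar> / 2"
  have \<tau>0: "\<bar>\<tau>1 - \<sigma>\<bar> < \<delta>0" "\<bar>\<tau>2 - \<sigma>\<bar> < \<delta>0"
    using \<tau> \<delta> by auto
  have Re_ne: "Re (g \<tau>1) \<noteq> Re (g \<tau>2)"
    using Re_inj[OF \<tau>0] \<tau>(3) by force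
  have "(Re (g \<tau>1) - m) * (Re (g \<tau>2) - m) = - ((Re (g \<tau>1) - Re (g \<tau>2)) ^ 2 / 4)"
    by (simp add: m_def field_simps power2_eq_square)
  then obtain \<tau> where \<tau>': "\<tau> \<in> {\<tau>1..\<tau>2}" "Re (g \<tau>) = m"
    using IVT_opposite_signs[of \<tau>1 \<tau>2 "\<lambda>t. Re (g t)" m] \<tau>(3) continuous_on_Re_g by auto
  have \<tau>\<delta>: "\<bar>\<tau> - \<sigma>\<bar> < \<delta>"
    using \<tau> \<tau>'(1) unfolding abs_less_iff by auto
  have half: "Re (g \<tau>) - Re (g \<tau>1) = - ((Re (g \<tau>1) - Re (g \<tau>2)) / 2)"
    using \<tau>'(2) by (simp add: m_def field_simps)
  then have "\<tau> \<noteq> \<tau>1"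
    using Re_ne by auto
  then have "\<bar>Im (g \<tau>) - Im (g \<tau>1)\<bar> < \<bar>Re (g \<tau>) - Re (g \<tau>1)\<bar>"
    using chord_slope[of \<tau>1 \<tau>] \<tau>0(1) \<tau>\<delta> \<tau>'(1) \<delta> by auto
  also have "\<bar>Re (g \<tau>) - Re (g \<tau>1)\<bar> = r"
    unfolding half r_def by simp
  finally have slope: "\<bar>Im (g \<tau>) - Im (g \<tau>1)\<bar> < r" .
  have "\<bar>Re (g \<tau>1) - Re (g \<sigma>)\<bar> < \<eta> / 2" "\<bar>Re (g \<tau>2) - Re (g \<sigma>)\<bar> < \<eta> / 2"
    using abs_Re_le_cmod[of "g \<tau>1 - g \<sigma>"] abs_Re_le_cmod[of "g \<tau>2 - g \<sigma>"] close[OF \<tau>(1)] close[OF \<tau>(2)]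
    unfolding minus_complex.sel by linarith+
  moreover have "\<bar>Re (g \<tau>1) - Re (g \<tau>2)\<bar> \<le> \<bar>Re (g \<tau>1) - Re (g \<sigma>)\<bar> + \<bar>Re (g \<tau>2) - Re (g \<sigma>)\<bar>"
    using abs_triangle_ineq4[of "Re (g \<tau>1) - Re (g \<sigma>)" "Re (g \<tau>2) - Re (g \<sigma>)"] by simp
  moreover have "2 * r = \<bar>Re (g \<tau>1) - Re (g \<tau>2)\<bar>"
    by (simp add: r_def)
  ultimately have "r < \<eta> / 2"
    by linarith
  define v where "v = Im (g \<tau>1) + r - Im (g \<tau>)"
  have "v \<in> {0<..<\<eta>}"
    using slope \<open>r < \<eta> / 2\<close> unfolding v_def abs_less_iff greaterThanLessThan_iff by linarith
  moreover have "apex (g \<tau>1) (g \<tau>2) = g \<tau> + \<i> * of_real v"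
    using \<tau>'(2) level by (simp add: apex_def m_def r_def v_def complex_eq_iff)
  ultimately show ?thesis
    using \<tau>\<delta> unfolding vstrip_iff by blast
qed

end

lemma horizontal_tangent_structure:
  assumes "Im (g' \<sigma>) = 0"
  obtains \<delta> \<eta> \<kappa> where "0 < \<delta>" "0 < \<eta>" "0 < \<kappa>"
    "vstrip \<sigma> \<delta> ({-\<eta><..<\<eta>} - {0}) \<inter> range g = {}"
    "ball (g \<sigma>) \<kappa> \<subseteq> range g \<union> vstrip \<sigma> \<delta> ({-\<eta><..<\<eta>} - {0})"
    "\<And>\<tau>1 \<tau>2. \<bar>\<tau>1 - \<sigma>\<bar> < \<delta> \<Longrightarrow> \<bar>\<tau>2 - \<sigma>\<bar> < \<delta> \<Longrightarrow> Im (g \<tau>1) = Im (g \<tau>2) \<Longrightarrow> g \<tau>1 \<noteq> g \<tau>2 \<Longrightarrow>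
        apex (g \<tau>1) (g \<tau>2) \<in> vstrip \<sigma> \<delta> {0<..<\<eta>}"
proof -
  obtain \<delta>0 k e where cone: "0 < \<delta>0" "0 < k" "\<bar>e\<bar> = 1"
    "\<And>t. \<bar>t - \<sigma>\<bar> < \<delta>0 \<Longrightarrow> \<bar>Im (g' t)\<bar> < k \<and> k < e * Re (g' t)"
    using horizontal_tangent_cone[OF assms] by blast
  obtain \<rho> where \<rho>: "0 < \<rho>"
    and iso: "\<And>w. w \<in> range g \<Longrightarrow> cmod (w - g \<sigma>) < \<rho> \<Longrightarrow> \<exists>\<tau>. \<bar>\<tau> - \<sigma>\<bar> < \<delta>0 \<and> w = g \<tau>"
    using curve_isolation[OF cone(1)] by blast
  define \<eta> where "\<eta> = \<rho> / 2"
  obtain \<delta>1 where \<delta>1: "0 < \<delta>1" and near: "\<And>\<tau>. dist \<tau> \<sigma> < \<delta>1 \<Longrightarrow> dist (g \<tau>) (g \<sigma>) < \<eta> / 2"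
    using isCont_g[of \<sigma>] \<rho> unfolding continuous_at_eps_delta \<eta>_def by (meson half_gt_zero)
  define \<delta> where "\<delta> = min \<delta>0 \<delta>1"
  define \<kappa> where "\<kappa> = min (k * \<delta> / 4) (\<eta> / 2)"
  have \<delta>: "0 < \<delta>" "\<delta> \<le> \<delta>0"
    using cone(1) \<delta>1 by (auto simp: \<delta>_def)
  have close: "cmod (g \<tau> - g \<sigma>) < \<eta> / 2" if "\<bar>\<tau> - \<sigma>\<bar> < \<delta>" for \<tau>
    using near[of \<tau>] that by (simp add: \<delta>_def dist_norm dist_real_def)
  show thesis
  proof (rule that[OF \<delta>(1) _ _ vertical_segments_free[OF cone \<delta>(2) close]
        disc_covered[OF cone \<delta> close]])
    show "0 < \<eta>" "0 < \<kappa>"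
      using \<rho> \<delta> cone(2) by (auto simp: \<eta>_def \<kappa>_def)
    show "\<And>w. w \<in> range g \<Longrightarrow> cmod (w - g \<sigma>) < 2 * \<eta> \<Longrightarrow> \<exists>\<tau>. \<bar>\<tau> - \<sigma>\<bar> < \<delta>0 \<and> w = g \<tau>"
      using iso by (simp add: \<eta>_def)
    show "\<kappa> \<le> k * \<delta> / 4" "\<kappa> \<le> \<eta> / 2"
      by (auto simp: \<kappa>_def)
    fix \<tau>1 \<tau>2 assume \<tau>: "\<bar>\<tau>1 - \<sigma>\<bar> < \<delta>" "\<bar>\<tau>2 - \<sigma>\<bar> < \<delta>" and level: "Im (g \<tau>1) = Im (g \<tau>2)"
      and "g \<tau>1 \<noteq> g \<tau>2"
    then have "\<tau>1 \<noteq> \<tau>2"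
      by auto
    then have "\<tau>1 < \<tau>2 \<or> \<tau>2 < \<tau>1"
      by linarith
    then show "apex (g \<tau>1) (g \<tau>2) \<in> vstrip \<sigma> \<delta> {0<..<\<eta>}"
    proof
      assume "\<tau>1 < \<tau>2"
      then show ?thesis
        using chord_apex_above[OF cone \<delta>(2) close \<tau>] level by blast
    next
      assume "\<tau>2 < \<tau>1"
      then show ?thesis
        using chord_apex_above[OF cone \<delta>(2) close \<tau>(2,1)] level apex_commute by metis
    qed
  qed
qed

lemma vstrip_inside_or_outside:
  assumes "convex V" "V \<subseteq> {-\<eta><..<\<eta>} - {0}" "vstrip \<sigma> \<delta> ({-\<eta><..<\<eta>} - {0}) \<inter> range g = {}"
  shows "vstrip \<sigma> \<delta> V \<subseteq> inside (range g) \<or> vstrip \<sigma> \<delta> V \<subseteq> outside (range g)"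
  using connected_inside_or_outside[OF connected_vstrip[OF assms(1)]] vstrip_mono[OF assms(2)] assms(3)
  by blast

text \<open>If apexes of short horizontal chords near g(\<sigma>) with distinct ends lie in U, then such
  apexes avoid every set Y that misses both U and the curve (for equal ends the apex is a
  point of the curve).\<close>

lemma chord_apexes_avoid:
  assumes chord: "\<And>\<tau>1 \<tau>2. \<bar>\<tau>1 - \<sigma>\<bar> < \<delta> \<Longrightarrow> \<bar>\<tau>2 - \<sigma>\<bar> < \<delta> \<Longrightarrow> Im (g \<tau>1) = Im (g \<tau>2) \<Longrightarrow>
      g \<tau>1 \<noteq> g \<tau>2 \<Longrightarrow> apex (g \<tau>1) (g \<tau>2) \<in> U"
    and disjoint: "U \<inter> Y = {}" "range g \<inter> Y = {}"
    and \<tau>: "\<bar>\<tau>1 - \<sigma>\<bar> < \<delta>" "\<bar>\<tau>2 - \<sigma>\<bar> < \<delta>" "Im (g \<tau>1) = Im (g \<tau>2)"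
  shows "apex (g \<tau>1) (g \<tau>2) \<notin> Y"
proof (cases "g \<tau>1 = g \<tau>2")
  case True
  then have "apex (g \<tau>1) (g \<tau>2) \<in> range g"
    by simp
  then show ?thesis
    using disjoint(2) by blast
next
  case False
  then show ?thesis
    using chord[OF \<tau>] disjoint(1) by blast
qed

text \<open>At a lowest point the segments below the curve are outside it (they lead downwards to
  infinity), hence the segments above are inside, as the curve is the frontier of its
  inside.  So apexes of short horizontal chords near a lowest point are not outside.\<close>

lemma apex_near_lowest_point:
  assumes low: "\<And>t. Im (g \<sigma>) \<le> Im (g t)"
  obtains \<delta> where "0 < \<delta>"
    "\<And>\<tau>1 \<tau>2. \<bar>\<tau>1 - \<sigma>\<bar> < \<delta> \<Longrightarrow> \<bar>\<tau>2 - \<sigma>\<bar> < \<delta> \<Longrightarrow> Im (g \<tau>1) = Im (g \<tau>2) \<Longrightarrow>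
       apex (g \<tau>1) (g \<tau>2) \<notin> outside (range g)"
proof -
  have "Im (g' \<sigma>) = 0"
    using DERIV_local_min[OF DERIV_Im_g, of 1] low by auto
  then obtain \<delta> \<eta> \<kappa> where \<delta>: "0 < \<delta>" "0 < \<eta>" "0 < \<kappa>"
    and free: "vstrip \<sigma> \<delta> ({-\<eta><..<\<eta>} - {0}) \<inter> range g = {}"
    and cover: "ball (g \<sigma>) \<kappa> \<subseteq> range g \<union> vstrip \<sigma> \<delta> ({-\<eta><..<\<eta>} - {0})"
    and chord: "\<And>\<tau>1 \<tau>2. \<bar>\<tau>1 - \<sigma>\<bar> < \<delta> \<Longrightarrow> \<bar>\<tau>2 - \<sigma>\<bar> < \<delta> \<Longrightarrow> Im (g \<tau>1) = Im (g \<tau>2) \<Longrightarrow>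
       g \<tau>1 \<noteq> g \<tau>2 \<Longrightarrow> apex (g \<tau>1) (g \<tau>2) \<in> vstrip \<sigma> \<delta> {0<..<\<eta>}"
    using horizontal_tangent_structure by blast
  define U where "U = vstrip \<sigma> \<delta> {0<..<\<eta>}"
  define L where "L = vstrip \<sigma> \<delta> {-\<eta><..<0}"
  have "{-\<eta><..<\<eta>} - {0} = {-\<eta><..<0} \<union> {0<..<\<eta>}"
    by auto
  then have split: "vstrip \<sigma> \<delta> ({-\<eta><..<\<eta>} - {0}) = L \<union> U"
    unfolding U_def L_def by (simp add: vstrip_Un)
  have "g \<sigma> + \<i> * of_real (- (\<eta> / 2)) \<in> L"
    unfolding L_def vstrip_iff using \<delta> by (intro exI[of _ \<sigma>] exI[of _ "- (\<eta> / 2)"]) simp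
  moreover have "g \<sigma> + \<i> * of_real (- (\<eta> / 2)) \<in> outside (range g)"
    by (rule below_outside[of _ "Im (g \<sigma>)"]) (use low \<delta>(2) in auto)
  moreover have "L \<subseteq> inside (range g) \<or> L \<subseteq> outside (range g)"
    unfolding L_def by (rule vstrip_inside_or_outside[OF _ _ free]) auto
  ultimately have L_out: "L \<subseteq> outside (range g)"
    using inside_Int_outside by blast
  have "g \<sigma> \<in> closure (inside (range g))"
    using jordan_curve(3) by (auto simp: frontier_def)
  then obtain z where z: "z \<in> inside (range g)" "dist z (g \<sigma>) < \<kappa>"
    using closure_approachable \<delta>(3) by metis
  have "z \<in> ball (g \<sigma>) \<kappa>"
    using z(2) by (simp add: dist_commute)
  moreover have "z \<notin> range g"
    using z(1) inside_no_overlap[of "range g"] by blast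
  moreover have "z \<notin> L"
    using z(1) L_out inside_Int_outside[of "range g"] by blast
  ultimately have "z \<in> U"
    using cover split by blast
  moreover have "U \<subseteq> inside (range g) \<or> U \<subseteq> outside (range g)"
    unfolding U_def by (rule vstrip_inside_or_outside[OF _ _ free]) auto
  ultimately have "U \<subseteq> inside (range g)"
    using z(1) inside_Int_outside by blast
  then have disjoint: "U \<inter> outside (range g) = {}" "range g \<inter> outside (range g) = {}"
    using inside_Int_outside[of "range g"] outside_no_overlap[of "range g"] by blast+
  show thesis
  proof (rule that[OF \<delta>(1)])
    fix \<tau>1 \<tau>2 assume "\<bar>\<tau>1 - \<sigma>\<bar> < \<delta>" "\<bar>\<tau>2 - \<sigma>\<bar> < \<delta>" "Im (g \<tau>1) = Im (g \<tau>2)"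
    then show "apex (g \<tau>1) (g \<tau>2) \<notin> outside (range g)"
      using chord_apexes_avoid[OF chord[folded U_def] disjoint] by blast
  qed
qed

text \<open>At a highest point the segments above the curve lead upwards to infinity, so apexes of
  short horizontal chords near a highest point are not inside.\<close>

lemma apex_near_highest_point:
  assumes high: "\<And>t. Im (g t) \<le> Im (g \<mu>)"
  obtains \<delta> where "0 < \<delta>"
    "\<And>\<tau>1 \<tau>2. \<bar>\<tau>1 - \<mu>\<bar> < \<delta> \<Longrightarrow> \<bar>\<tau>2 - \<mu>\<bar> < \<delta> \<Longrightarrow> Im (g \<tau>1) = Im (g \<tau>2) \<Longrightarrow>
       apex (g \<tau>1) (g \<tau>2) \<notin> inside (range g)"
proof -
  have "Im (g' \<mu>) = 0"
    using DERIV_local_max[OF DERIV_Im_g, of 1] high by auto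
  then obtain \<delta> \<eta> \<kappa> where \<delta>: "0 < \<delta>" "0 < \<eta>" "0 < \<kappa>"
    and free: "vstrip \<mu> \<delta> ({-\<eta><..<\<eta>} - {0}) \<inter> range g = {}"
    and "ball (g \<mu>) \<kappa> \<subseteq> range g \<union> vstrip \<mu> \<delta> ({-\<eta><..<\<eta>} - {0})"
    and chord: "\<And>\<tau>1 \<tau>2. \<bar>\<tau>1 - \<mu>\<bar> < \<delta> \<Longrightarrow> \<bar>\<tau>2 - \<mu>\<bar> < \<delta> \<Longrightarrow> Im (g \<tau>1) = Im (g \<tau>2) \<Longrightarrow>
       g \<tau>1 \<noteq> g \<tau>2 \<Longrightarrow> apex (g \<tau>1) (g \<tau>2) \<in> vstrip \<mu> \<delta> {0<..<\<eta>}"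
    using horizontal_tangent_structure by blast
  define U where "U = vstrip \<mu> \<delta> {0<..<\<eta>}"
  have "g \<mu> + \<i> * of_real (\<eta> / 2) \<in> U"
    unfolding U_def vstrip_iff using \<delta> by (intro exI[of _ \<mu>] exI[of _ "\<eta> / 2"]) simp
  moreover have "g \<mu> + \<i> * of_real (\<eta> / 2) \<in> outside (range g)"
    by (rule above_outside[of _ "Im (g \<mu>)"]) (use high \<delta>(2) in auto)
  moreover have "U \<subseteq> inside (range g) \<or> U \<subseteq> outside (range g)"
    unfolding U_def by (rule vstrip_inside_or_outside[OF _ _ free]) auto
  ultimately have "U \<subseteq> outside (range g)"
    using inside_Int_outside by blast
  then have disjoint: "U \<inter> inside (range g) = {}" "range g \<inter> inside (range g) = {}"
    using inside_Int_outside[of "range g"] inside_no_overlap[of "range g"] by blast+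
  show thesis
  proof (rule that[OF \<delta>(1)])
    fix \<tau>1 \<tau>2 assume "\<bar>\<tau>1 - \<mu>\<bar> < \<delta>" "\<bar>\<tau>2 - \<mu>\<bar> < \<delta>" "Im (g \<tau>1) = Im (g \<tau>2)"
    then show "apex (g \<tau>1) (g \<tau>2) \<notin> inside (range g)"
      using chord_apexes_avoid[OF chord[folded U_def] disjoint] by blast
  qed
qed


section \<open>Extremal arcs and the inscribed right isosceles triangle\<close>

lemma Im_attains_extrema:
  obtains tmin tmax where "\<And>t. Im (g tmin) \<le> Im (g t)" "\<And>t. Im (g t) \<le> Im (g tmax)"
proof -
  obtain tmin where tmin: "\<forall>t\<in>{0..1}. Im (g tmin) \<le> Im (g t)"
    using continuous_attains_inf[of "{0..1::real}" "\<lambda>t. Im (g t)"] continuous_on_Im_g by auto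
  obtain tmax where tmax: "\<forall>t\<in>{0..1}. Im (g t) \<le> Im (g tmax)"
    using continuous_attains_sup[of "{0..1::real}" "\<lambda>t. Im (g t)"] continuous_on_Im_g by auto
  have bounds: "Im (g tmin) \<le> Im (g t) \<and> Im (g t) \<le> Im (g tmax)" for t
  proof -
    have "g t \<in> g ` {0..1}"
      using range_eq[of 0] by simp
    then obtain t' where "t' \<in> {0..1}" "g t = g t'"
      by blast
    then show ?thesis
      using tmin tmax by simp
  qed
  show thesis
    by (rule that) (use bounds in blast)+
qed

text \<open>A simple closed curve does not lie on a horizontal line: otherwise its real part would
  take some value twice on a period.\<close>

lemma Im_not_constant: "\<exists>t. Im (g t) \<noteq> Im (g 0)"
proof (rule ccontr)
  assume flat: "\<not> ?thesis"
  define f where "f t = Re (g t)" for t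
  have level: "Im (g t) = Im (g 0)" for t
    using flat by blast
  have same: "g t1 = g t2" if "f t1 = f t2" for t1 t2
    using that level[of t1] level[of t2] by (simp add: f_def complex_eq_iff)
  have cont: "continuous_on {a..b} f" for a b
    unfolding f_def by (rule continuous_on_Re_g)
  have f1: "f 1 = f 0"
    using periodic[of 0] by (simp add: f_def)
  have "f (1/2) \<noteq> f 0"
    using inj_onD[OF inj_unit_period same[of "1/2" 0]] by auto
  define c where "c = (f 0 + f (1/2)) / 2"
  have ne: "f 0 \<noteq> c" "f (1/2) \<noteq> c"
    using \<open>f (1/2) \<noteq> f 0\<close> by (auto simp: c_def)
  have "(f 0 - c) * (f (1/2) - c) = - ((f 0 - f (1/2)) ^ 2 / 4)"
    by (simp add: c_def field_simps power2_eq_square)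
  then have opp: "(f 0 - c) * (f (1/2) - c) \<le> 0" "(f (1/2) - c) * (f 1 - c) \<le> 0"
    using f1 by (simp_all add: mult.commute)
  obtain t1 where t1: "t1 \<in> {0..1/2}" "f t1 = c"
    using IVT_opposite_signs[OF _ cont opp(1)] by auto
  obtain t2 where t2: "t2 \<in> {1/2..1}" "f t2 = c"
    using IVT_opposite_signs[OF _ cont opp(2)] by auto
  have "t1 \<noteq> 1/2" "t2 \<noteq> 1/2" "t2 \<noteq> 1"
    using t1(2) t2(2) ne f1 by metis+
  then have "t1 \<in> {0..<1}" "t2 \<in> {0..<1}" "t1 < t2"
    using t1(1) t2(1) by auto
  then show False
    using inj_onD[OF inj_unit_period same[of t1 t2]] t1(2) t2(2) by auto
qed

definition extremal_pair :: "real \<Rightarrow> real \<Rightarrow> bool" where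
  "extremal_pair \<sigma> \<mu> \<longleftrightarrow> \<sigma> < \<mu> \<and> \<mu> < \<sigma> + 1 \<and> (\<forall>t. Im (g \<sigma>) \<le> Im (g t) \<and> Im (g t) \<le> Im (g \<mu>)) \<and>
     (\<forall>\<tau>\<in>{\<sigma>..\<mu>}. Im (g \<tau>) = Im (g \<sigma>) \<longrightarrow> \<tau> = \<sigma>) \<and> (\<forall>\<tau>\<in>{\<sigma>..\<mu>}. Im (g \<tau>) = Im (g \<mu>) \<longrightarrow> \<tau> = \<mu>)"

lemma extremal_pairD:
  assumes "extremal_pair \<sigma> \<mu>"
  shows "\<sigma> < \<mu>" "\<mu> < \<sigma> + 1" "Im (g \<sigma>) \<le> Im (g t)" "Im (g t) \<le> Im (g \<mu>)"
    and "\<sigma> \<le> \<tau> \<Longrightarrow> \<tau> \<le> \<mu> \<Longrightarrow> Im (g \<tau>) = Im (g \<sigma>) \<Longrightarrow> \<tau> = \<sigma>"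
    and "\<sigma> \<le> \<tau> \<Longrightarrow> \<tau> \<le> \<mu> \<Longrightarrow> Im (g \<tau>) = Im (g \<mu>) \<Longrightarrow> \<tau> = \<mu>"
  using assms unfolding extremal_pair_def by auto

text \<open>An extremal pair exists: take \<sigma> the last lowest parameter in a period starting at a
  highest one, and \<mu> the first highest parameter after \<sigma>.\<close>

lemma extremal_pair_exists: "\<exists>\<sigma> \<mu>. extremal_pair \<sigma> \<mu>"
proof -
  obtain tmin \<tau>0 where tmin: "\<And>t. Im (g tmin) \<le> Im (g t)" and tmax: "\<And>t. Im (g t) \<le> Im (g \<tau>0)"
    using Im_attains_extrema by blast
  define ymin where "ymin = Im (g tmin)"
  define ymax where "ymax = Im (g \<tau>0)"
  obtain t where "Im (g t) \<noteq> Im (g 0)"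
    using Im_not_constant by blast
  then have "ymin < ymax"
    using tmin[of t] tmin[of 0] tmax[of t] tmax[of 0] unfolding ymin_def ymax_def by linarith
  have "closed ((\<lambda>t. Im (g t)) -` {y})" for y
    using continuous_closed_preimage[OF continuous_on_Im_g[of UNIV] closed_UNIV closed_singleton] by simp
  then have level_compact: "compact ({a..b} \<inter> (\<lambda>t. Im (g t)) -` {y})" for a b y
    by (intro compact_Int_closed compact_Icc)
  define Smin where "Smin = {\<tau>0..\<tau>0 + 1} \<inter> (\<lambda>t. Im (g t)) -` {ymin}"
  obtain t' where "\<tau>0 \<le> t'" "t' < \<tau>0 + 1" "g t' = g tmin"
    by (rule shift_into_period)
  then have "t' \<in> Smin"
    by (simp add: Smin_def ymin_def)
  then obtain \<sigma> where \<sigma>: "\<sigma> \<in> Smin" and \<sigma>_last: "\<And>t. t \<in> Smin \<Longrightarrow> t \<le> \<sigma>"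
    using compact_attains_sup[OF level_compact[of \<tau>0 "\<tau>0 + 1" ymin, folded Smin_def]] by blast
  have top_ends: "Im (g \<tau>0) = ymax" "Im (g (\<tau>0 + 1)) = ymax"
    using periodic[of \<tau>0] by (simp_all add: ymax_def)
  have \<sigma>_range: "\<tau>0 < \<sigma>" "\<sigma> < \<tau>0 + 1" "Im (g \<sigma>) = ymin"
    using \<sigma> top_ends \<open>ymin < ymax\<close> by (fastforce simp: Smin_def order_le_less)+
  define Smax where "Smax = {\<sigma>..\<tau>0 + 1} \<inter> (\<lambda>t. Im (g t)) -` {ymax}"
  have "\<tau>0 + 1 \<in> Smax"
    using \<sigma>_range top_ends by (simp add: Smax_def)
  then obtain \<mu> where \<mu>: "\<mu> \<in> Smax" and \<mu>_first: "\<And>t. t \<in> Smax \<Longrightarrow> \<mu> \<le> t"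
    using compact_attains_inf[OF level_compact[of \<sigma> "\<tau>0 + 1" ymax, folded Smax_def]] by blast
  have \<mu>_range: "\<sigma> < \<mu>" "\<mu> \<le> \<tau>0 + 1" "Im (g \<mu>) = ymax"
    using \<mu> \<sigma>_range \<open>ymin < ymax\<close> by (fastforce simp: Smax_def order_le_less)+
  have "extremal_pair \<sigma> \<mu>"
    unfolding extremal_pair_def
  proof (intro conjI allI ballI impI)
    show "\<sigma> < \<mu>" "\<mu> < \<sigma> + 1"
      using \<mu>_range \<sigma>_range by auto
    show "Im (g \<sigma>) \<le> Im (g t)" "Im (g t) \<le> Im (g \<mu>)" for t
      using tmin[of t] tmax[of t] \<sigma>_range \<mu>_range by (auto simp: ymin_def ymax_def)
    show "\<tau> = \<sigma>" if "\<tau> \<in> {\<sigma>..\<mu>}" "Im (g \<tau>) = Im (g \<sigma>)" for \<tau>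
      using \<sigma>_last[of \<tau>] that \<sigma>_range \<mu>_range by (auto simp: Smin_def)
    show "\<tau> = \<mu>" if "\<tau> \<in> {\<sigma>..\<mu>}" "Im (g \<tau>) = Im (g \<mu>)" for \<tau>
      using \<mu>_first[of \<tau>] that \<mu>_range by (auto simp: Smax_def)
  qed
  then show ?thesis
    by blast
qed

lemma arcs_meet_at_ends:
  assumes "\<sigma> < \<mu>" "\<mu> < \<sigma> + 1" "\<sigma> \<le> x" "x \<le> \<mu>" "\<mu> - 1 \<le> y" "y \<le> \<sigma>" "g x = g y"
  shows "(x = \<sigma> \<and> y = \<sigma>) \<or> (x = \<mu> \<and> y = \<mu> - 1)"
proof (cases "x = \<mu>")
  case True
  then have "g (\<mu> - 1) = g y"
    using assms(7) periodic[of "\<mu> - 1"] by simp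
  then have "\<mu> - 1 = y"
    using inj_onD[OF inj_on_period[of "\<mu> - 1"]] assms by auto
  with True show ?thesis by simp
next
  case False
  then have "x = y"
    using inj_onD[OF inj_on_period[of "\<mu> - 1"] assms(7)] assms by auto
  then show ?thesis
    using assms by auto
qed

lemma apex_near_bottom_corner:
  assumes "extremal_pair \<sigma> \<mu>"
  obtains \<delta> where "0 < \<delta>"
    "\<And>s t. 0 \<le> s \<Longrightarrow> s < \<delta> \<Longrightarrow> 0 \<le> t \<Longrightarrow> t < \<delta> \<Longrightarrow>
      Im (g (up_arc \<sigma> \<mu> s)) = Im (g (down_arc \<sigma> \<mu> t)) \<Longrightarrow>
      apex (g (up_arc \<sigma> \<mu> s)) (g (down_arc \<sigma> \<mu> t)) \<notin> outside (range g)"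
proof -
  note \<sigma>\<mu> = extremal_pairD(1,2)[OF assms]
  obtain \<delta>1 where \<delta>1: "0 < \<delta>1" and near: "\<And>\<tau>1 \<tau>2. \<bar>\<tau>1 - \<sigma>\<bar> < \<delta>1 \<Longrightarrow> \<bar>\<tau>2 - \<sigma>\<bar> < \<delta>1 \<Longrightarrow>
      Im (g \<tau>1) = Im (g \<tau>2) \<Longrightarrow> apex (g \<tau>1) (g \<tau>2) \<notin> outside (range g)"
    using apex_near_lowest_point[OF extremal_pairD(3)[OF assms]] by blast
  show thesis
  proof (rule that[of "min \<delta>1 1"])
    show "0 < min \<delta>1 1"
      using \<delta>1 by simp
    fix s t assume st: "0 \<le> s" "s < min \<delta>1 1" "0 \<le> t" "t < min \<delta>1 1"
      and level: "Im (g (up_arc \<sigma> \<mu> s)) = Im (g (down_arc \<sigma> \<mu> t))"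
    have "s \<le> 1" "t \<le> 1"
      using st by linarith+
    then have "\<bar>up_arc \<sigma> \<mu> s - \<sigma>\<bar> \<le> s" "\<bar>down_arc \<sigma> \<mu> t - \<sigma>\<bar> \<le> t"
      using up_arc_bounds[OF \<sigma>\<mu> st(1)] down_arc_bounds[OF \<sigma>\<mu> st(3)] by blast+
    then have "\<bar>up_arc \<sigma> \<mu> s - \<sigma>\<bar> < \<delta>1" "\<bar>down_arc \<sigma> \<mu> t - \<sigma>\<bar> < \<delta>1"
      using st by linarith+
    then show "apex (g (up_arc \<sigma> \<mu> s)) (g (down_arc \<sigma> \<mu> t)) \<notin> outside (range g)"
      using near level by blast
  qed
qed

lemma apex_near_top_corner:
  assumes "extremal_pair \<sigma> \<mu>"
  obtains \<delta> where "0 < \<delta>"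
    "\<And>s t. 1 - \<delta> < s \<Longrightarrow> s \<le> 1 \<Longrightarrow> 1 - \<delta> < t \<Longrightarrow> t \<le> 1 \<Longrightarrow>
      Im (g (up_arc \<sigma> \<mu> s)) = Im (g (down_arc \<sigma> \<mu> t)) \<Longrightarrow>
      apex (g (up_arc \<sigma> \<mu> s)) (g (down_arc \<sigma> \<mu> t)) \<notin> inside (range g)"
proof -
  note \<sigma>\<mu> = extremal_pairD(1,2)[OF assms]
  obtain \<delta>2 where \<delta>2: "0 < \<delta>2" and near: "\<And>\<tau>1 \<tau>2. \<bar>\<tau>1 - \<mu>\<bar> < \<delta>2 \<Longrightarrow> \<bar>\<tau>2 - \<mu>\<bar> < \<delta>2 \<Longrightarrow>
      Im (g \<tau>1) = Im (g \<tau>2) \<Longrightarrow> apex (g \<tau>1) (g \<tau>2) \<notin> inside (range g)"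
    using apex_near_highest_point[OF extremal_pairD(4)[OF assms]] by blast
  show thesis
  proof (rule that[of "min \<delta>2 1"])
    show "0 < min \<delta>2 1"
      using \<delta>2 by simp
    fix s t assume st: "1 - min \<delta>2 1 < s" "s \<le> 1" "1 - min \<delta>2 1 < t" "t \<le> 1"
      and level: "Im (g (up_arc \<sigma> \<mu> s)) = Im (g (down_arc \<sigma> \<mu> t))"
    have "0 \<le> s" "0 \<le> t"
      using st by linarith+
    then have "\<bar>up_arc \<sigma> \<mu> s - \<mu>\<bar> \<le> 1 - s" "\<bar>down_arc \<sigma> \<mu> t + 1 - \<mu>\<bar> \<le> 1 - t"
      using up_arc_bounds[OF \<sigma>\<mu> _ st(2)] down_arc_bounds[OF \<sigma>\<mu> _ st(4)] by blast+
    then have "\<bar>up_arc \<sigma> \<mu> s - \<mu>\<bar> < \<delta>2" "\<bar>down_arc \<sigma> \<mu> t + 1 - \<mu>\<bar> < \<delta>2"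
      using st by linarith+
    moreover have "g (down_arc \<sigma> \<mu> t + 1) = g (down_arc \<sigma> \<mu> t)"
      by (rule periodic)
    ultimately show "apex (g (up_arc \<sigma> \<mu> s)) (g (down_arc \<sigma> \<mu> t)) \<notin> inside (range g)"
      using near[of "up_arc \<sigma> \<mu> s" "down_arc \<sigma> \<mu> t + 1"] level by simp
  qed
qed

text \<open>The crossing lemma applied to the two extremal arcs, with h the height difference and F
  the apex of the pair of points g(up_arc s), g(down_arc t), yields a non-trivial horizontal
  chord between the two arcs whose apex is on the curve.\<close>

lemma arcs_chord_with_apex_on_curve:
  assumes "extremal_pair \<sigma> \<mu>"
  obtains s t where "s \<in> {0..1}" "t \<in> {0..1}" "(s, t) \<noteq> (0, 0)" "(s, t) \<noteq> (1, 1)"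
    "Im (g (up_arc \<sigma> \<mu> s)) = Im (g (down_arc \<sigma> \<mu> t))"
    "apex (g (up_arc \<sigma> \<mu> s)) (g (down_arc \<sigma> \<mu> t)) \<in> range g"
proof -
  note \<sigma>\<mu> = extremal_pairD(1,2)[OF assms]
    and low = extremal_pairD(3)[OF assms] and high = extremal_pairD(4)[OF assms]
    and low_once = extremal_pairD(5)[OF assms] and high_once = extremal_pairD(6)[OF assms]
  obtain \<delta>1 where \<delta>1: "0 < \<delta>1" and bottom_corner: "\<And>s t. 0 \<le> s \<Longrightarrow> s < \<delta>1 \<Longrightarrow> 0 \<le> t \<Longrightarrow> t < \<delta>1 \<Longrightarrow>
      Im (g (up_arc \<sigma> \<mu> s)) = Im (g (down_arc \<sigma> \<mu> t)) \<Longrightarrow>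
      apex (g (up_arc \<sigma> \<mu> s)) (g (down_arc \<sigma> \<mu> t)) \<notin> outside (range g)"
    using apex_near_bottom_corner[OF assms] by blast
  obtain \<delta>2 where \<delta>2: "0 < \<delta>2" and top_corner: "\<And>s t. 1 - \<delta>2 < s \<Longrightarrow> s \<le> 1 \<Longrightarrow> 1 - \<delta>2 < t \<Longrightarrow> t \<le> 1 \<Longrightarrow>
      Im (g (up_arc \<sigma> \<mu> s)) = Im (g (down_arc \<sigma> \<mu> t)) \<Longrightarrow>
      apex (g (up_arc \<sigma> \<mu> s)) (g (down_arc \<sigma> \<mu> t)) \<notin> inside (range g)"
    using apex_near_top_corner[OF assms] by blast
  define \<delta> where "\<delta> = min (min \<delta>1 \<delta>2) (1/2)"
  have \<delta>: "0 < \<delta>" "\<delta> \<le> \<delta>1" "\<delta> \<le> \<delta>2" "\<delta> \<le> 1/2"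
    using \<delta>1 \<delta>2 by (auto simp: \<delta>_def)
  define p q where "p = up_arc \<sigma> \<mu>" and "q = down_arc \<sigma> \<mu>"
  note p = up_arc_bounds[OF \<sigma>\<mu>, folded p_def] and q = down_arc_bounds[OF \<sigma>\<mu>, folded q_def]
  define h where "h z = Im (g (p (fst z))) - Im (g (q (snd z)))" for z
  define F where "F z = apex (g (p (fst z))) (g (q (snd z)))" for z
  have coord: "\<bar>fst z - a\<bar> \<le> dist z (a, b)" "\<bar>snd z - b\<bar> \<le> dist z (a, b)" for z :: "real \<times> real" and a b
    using dist_fst_le[of z "(a, b)"] dist_snd_le[of z "(a, b)"] by (auto simp: dist_real_def)
  have "\<exists>z\<in>cbox (0,0) (1,1). h z = 0 \<and> \<delta> \<le> dist z (0,0) \<and> \<delta> \<le> dist z (1,1) \<and>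
      F z \<notin> inside (range g) \<union> outside (range g)"
  proof (rule level_set_crossing)
    show "continuous_on (cbox (0,0) (1,1)) h" "continuous_on (cbox (0,0) (1,1)) F"
      unfolding h_def F_def p_def q_def up_arc_def down_arc_def apex_def
      by (intro continuous_intros continuous_on_compose2[OF continuous_on_g[of UNIV]]; simp)+
    show "open (inside (range g))" "open (outside (range g))"
      by (fact jordan_curve)+
    show "inside (range g) \<inter> outside (range g) = {}"
      by (fact inside_Int_outside)
    show "0 < \<delta>" "\<delta> \<le> 1/2"
      by (fact \<delta>)+
    show "h (0, t) \<le> 0" for t
      using low[of "q t"] up_arc_ends(1)[OF \<sigma>\<mu>(1), of 0] by (simp add: h_def p_def)
    show "h (1, t) \<ge> 0" for t
      using high[of "q t"] up_arc_ends(2)[OF \<sigma>\<mu>(1), of 1] by (simp add: h_def p_def)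
    show "s = 0" if "0 \<le> s" "s \<le> 1" "h (s, 0) = 0" for s
      using low_once[of "p s"] p[OF that(1,2)] that(3) down_arc_ends(1)[OF \<sigma>\<mu>(2), of 0]
        up_arc_ends(1)[OF \<sigma>\<mu>(1), of s] by (simp add: h_def p_def q_def)
    show "s = 1" if "0 \<le> s" "s \<le> 1" "h (s, 1) = 0" for s
      using high_once[of "p s"] p[OF that(1,2)] that(3) down_arc_ends(2)[OF \<sigma>\<mu>(2), of 1]
        up_arc_ends(2)[OF \<sigma>\<mu>(1), of s] periodic[of "\<mu> - 1"] by (simp add: h_def p_def q_def)
    show "F z \<notin> outside (range g)" if z: "z \<in> cbox (0,0) (1,1)" "h z = 0" "dist z (0,0) < \<delta>" for z
    proof -
      have "fst z < \<delta>1" "snd z < \<delta>1"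
        using coord[of z 0 0] z(3) \<delta> unfolding abs_le_iff by linarith+
      then show ?thesis
        using bottom_corner[of "fst z" "snd z"] z(1,2) by (simp add: F_def h_def p_def q_def mem_unit_square)
    qed
    show "F z \<notin> inside (range g)" if z: "z \<in> cbox (0,0) (1,1)" "h z = 0" "dist z (1,1) < \<delta>" for z
    proof -
      have "1 - \<delta>2 < fst z" "1 - \<delta>2 < snd z"
        using coord[of z 1 1] z(3) \<delta> unfolding abs_le_iff by linarith+
      then show ?thesis
        using top_corner[of "fst z" "snd z"] z(1,2) by (simp add: F_def h_def p_def q_def mem_unit_square)
    qed
  qed
  then obtain z where z: "z \<in> cbox (0,0) (1,1)" "h z = 0" "\<delta> \<le> dist z (0,0)" "\<delta> \<le> dist z (1,1)"
    and F_not: "F z \<notin> inside (range g) \<union> outside (range g)"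
    by blast
  have "fst z \<in> {0..1}" "snd z \<in> {0..1}"
    using z(1) by (simp_all add: mem_unit_square)
  moreover have "(fst z, snd z) \<noteq> (0, 0)" "(fst z, snd z) \<noteq> (1, 1)"
    using z(3,4) \<delta>(1) by auto
  moreover have "Im (g (up_arc \<sigma> \<mu> (fst z))) = Im (g (down_arc \<sigma> \<mu> (snd z)))"
    using z(2) by (simp add: h_def p_def q_def)
  moreover have "apex (g (up_arc \<sigma> \<mu> (fst z))) (g (down_arc \<sigma> \<mu> (snd z))) \<in> range g"
    using F_not inside_Un_outside[of "range g"] by (auto simp: F_def p_def q_def)
  ultimately show thesis
    by (rule that)
qed

text \<open>Since the two arcs meet only at their ends, the chord found above is non-trivial.\<close>

lemma chord_with_apex_on_curve:
  assumes "extremal_pair \<sigma> \<mu>"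
  shows "\<exists>x y. g x \<noteq> g y \<and> Im (g x) = Im (g y) \<and> apex (g x) (g y) \<in> range g"
proof -
  note \<sigma>\<mu> = extremal_pairD(1,2)[OF assms]
  obtain s t where st: "s \<in> {0..1}" "t \<in> {0..1}" "(s, t) \<noteq> (0, 0)" "(s, t) \<noteq> (1, 1)"
    and chord: "Im (g (up_arc \<sigma> \<mu> s)) = Im (g (down_arc \<sigma> \<mu> t))"
      "apex (g (up_arc \<sigma> \<mu> s)) (g (down_arc \<sigma> \<mu> t)) \<in> range g"
    using arcs_chord_with_apex_on_curve[OF assms] by blast
  have "g (up_arc \<sigma> \<mu> s) \<noteq> g (down_arc \<sigma> \<mu> t)"
  proof
    assume "g (up_arc \<sigma> \<mu> s) = g (down_arc \<sigma> \<mu> t)"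
    then have "(up_arc \<sigma> \<mu> s = \<sigma> \<and> down_arc \<sigma> \<mu> t = \<sigma>) \<or> (up_arc \<sigma> \<mu> s = \<mu> \<and> down_arc \<sigma> \<mu> t = \<mu> - 1)"
      using arcs_meet_at_ends[OF \<sigma>\<mu>, of "up_arc \<sigma> \<mu> s" "down_arc \<sigma> \<mu> t"]
        up_arc_bounds[OF \<sigma>\<mu>, of s] down_arc_bounds[OF \<sigma>\<mu>, of t] st(1,2) by auto
    then show False
      using st(3,4) up_arc_ends[OF \<sigma>\<mu>(1)] down_arc_ends[OF \<sigma>\<mu>(2)] by auto
  qed
  then show ?thesis
    using chord by blast
qed

text \<open>The normalised theorem: every C1 Jordan curve contains the vertices of a positive
  homothetic copy of the right isosceles triangle (-1, 1, i).\<close>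

theorem inscribed_right_isosceles:
  "\<exists>m r. 0 < r \<and> m - of_real r \<in> range g \<and> m + of_real r \<in> range g \<and> m + \<i> * of_real r \<in> range g"
proof -
  obtain \<sigma> \<mu> where extremal: "extremal_pair \<sigma> \<mu>"
    using extremal_pair_exists by blast
  then obtain x y where chord: "g x \<noteq> g y" "Im (g x) = Im (g y)" and apex: "apex (g x) (g y) \<in> range g"
    using chord_with_apex_on_curve[OF extremal] by blast
  obtain m r where "0 < r" "{m - of_real r, m + of_real r} = {g x, g y}"
    "apex (g x) (g y) = m + \<i> * of_real r"
    using apex_right_isosceles[OF chord(2,1)] by blast
  moreover have "m - of_real r \<in> {g x, g y}" "m + of_real r \<in> {g x, g y}"
    using \<open>{m - of_real r, m + of_real r} = {g x, g y}\<close> by blast+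
  ultimately have "m - of_real r \<in> range g \<and> m + of_real r \<in> range g \<and> m + \<i> * of_real r \<in> range g"
    using apex by auto
  then show ?thesis
    using \<open>0 < r\<close> by blast
qed

end


section \<open>Affine reduction and the main theorem\<close>

lemma jcurve_affine_image:
  assumes "jcurve g g'" "linear L" "inj L"
  shows "jcurve (\<lambda>t. L (g t) + c) (\<lambda>t. L (g' t))"
proof -
  interpret jcurve g g' by fact
  have bl: "bounded_linear L"
    using assms(2) linear_conv_bounded_linear by blast
  show ?thesis
  proof unfold_locales
    show "((\<lambda>t. L (g t) + c) has_vector_derivative L (g' t)) (at t)" for t
      using bounded_linear.has_vector_derivative[OF bl has_deriv] by (auto intro!: derivative_eq_intros)
    show "continuous_on UNIV (\<lambda>t. L (g' t))"
      by (rule continuous_on_compose2[OF linear_continuous_on[OF bl] cont_deriv]) auto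
    show "L (g' t) \<noteq> 0" for t
      using deriv_nonzero assms(2,3) linear_injective_0 by blast
    show "L (g (t + 1)) + c = L (g t) + c" for t
      by (simp add: periodic)
    show "inj_on (\<lambda>t. L (g t) + c) {0..<1}"
      using inj_unit_period assms(3) by (auto simp: inj_on_def dest: injD)
  qed
qed

lemma jordan_C1_curve_jcurve:
  assumes "jordan_C1_curve \<Gamma>"
  obtains g g' where "jcurve g g'" "\<Gamma> = range g"
proof -
  obtain g where g: "g C1_differentiable_on UNIV" "\<forall>t. vector_derivative g (at t) \<noteq> 0"
    "\<forall>t. g (t + 1) = g t" "inj_on g {0..<1}" "\<Gamma> = g ` {0..1}"
    using assms unfolding jordan_C1_curve_def by blast
  obtain g' where g': "\<And>t. (g has_vector_derivative g' t) (at t)" "continuous_on UNIV g'"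
    using g(1) unfolding C1_differentiable_on_def by blast
  have "jcurve g g'"
  proof unfold_locales
    show "g' t \<noteq> 0" for t
      using g(2) vector_derivative_at[OF g'(1)] by metis
  qed (use g g' in auto)
  moreover have "\<Gamma> = range g"
    using g(5) jcurve.range_eq[OF \<open>jcurve g g'\<close>, of 0] by simp
  ultimately show thesis
    by (rule that)
qed

text \<open>The real-linear map sending 2 to u and 1 + i to w; it maps the triangle (-1, 1, i),
  shifted by 1, onto (0, u, w).\<close>

definition triangle_map :: "complex \<Rightarrow> complex \<Rightarrow> complex \<Rightarrow> complex" where
  "triangle_map u w z = of_real ((Re z - Im z) / 2) * u + of_real (Im z) * w"

lemma linear_triangle_map: "linear (triangle_map u w)"
  by (rule linearI) (simp_all add: triangle_map_def complex_eq_iff field_simps)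

lemma triangle_map_vertices:
  "triangle_map u w (m + of_real r + 1) = triangle_map u w (m - of_real r + 1) + of_real r * u"
  "triangle_map u w (m + \<i> * of_real r + 1) = triangle_map u w (m - of_real r + 1) + of_real r * w"
  by (simp_all add: triangle_map_def complex_eq_iff field_simps)

lemma inj_triangle_map:
  assumes "\<not> collinear {0, u, w}"
  shows "inj (triangle_map u w)"
proof -
  have "z = 0" if z: "triangle_map u w z = 0" for z
  proof (cases "Im z = 0")
    case True
    then have "of_real (Re z / 2) * u = 0"
      using z by (simp add: triangle_map_def)
    then have "Re z = 0"
      using assms by (auto simp: collinear_lemma)
    with True show ?thesis
      by (simp add: complex_eq_iff)
  next
    case False
    have "of_real (Im z) * w = - (of_real ((Re z - Im z) / 2) * u)"
      using z by (simp add: triangle_map_def eq_neg_iff_add_eq_0 add.commute)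
    then have "w = of_real (- ((Re z - Im z) / 2) / Im z) * u"
      using False by (simp add: field_simps)
    then have "collinear {0, u, w}"
      unfolding collinear_lemma scaleR_conv_of_real by blast
    with assms show ?thesis
      by simp
  qed
  then show ?thesis
    using linear_injective_0[OF linear_triangle_map] by blast
qed

text \<open>Transport of the normalised theorem along the affine bijection z \<mapsto> M (z + 1) + A, where
  M = triangle_map (B - A) (C - A) sends (-1, 1, i) + 1 to (0, B - A, C - A): the curve contains
  P, P + r (B - A) and P + r (C - A) for some P and r > 0.\<close>

lemma inscribed_copy_of_triangle:
  assumes \<gamma>: "jcurve \<gamma> \<gamma>'" and noncollinear: "\<not> collinear {A, B, C}"
  obtains P r where "0 < r" "P \<in> range \<gamma>" "P + of_real r * (B - A) \<in> range \<gamma>"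
    "P + of_real r * (C - A) \<in> range \<gamma>"
proof -
  define M where "M = triangle_map (B - A) (C - A)"
  have "collinear {B, A, C} \<longleftrightarrow> collinear {0, B - A, C - A}"
    using collinear_3[of B A C] by simp
  then have "\<not> collinear {0, B - A, C - A}"
    using noncollinear by (simp add: insert_commute)
  then obtain L where L: "linear L" "\<And>z. L (M z) = z" "\<And>z. M (L z) = z"
    using linear_injective_isomorphism[OF linear_triangle_map inj_triangle_map] unfolding M_def
    by blast
  have "inj L"
    by (metis L(3) injI)
  interpret normalised: jcurve "\<lambda>t. L (\<gamma> t) + (- L A - 1)" "\<lambda>t. L (\<gamma>' t)"
    by (rule jcurve_affine_image[OF \<gamma> L(1) \<open>inj L\<close>])
  obtain m r where r: "0 < r" and on: "m - of_real r \<in> range (\<lambda>t. L (\<gamma> t) + (- L A - 1))"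
    "m + of_real r \<in> range (\<lambda>t. L (\<gamma> t) + (- L A - 1))"
    "m + \<i> * of_real r \<in> range (\<lambda>t. L (\<gamma> t) + (- L A - 1))"
    using normalised.inscribed_right_isosceles by blast
  have from_normalised: "M (z + 1) + A \<in> range \<gamma>" if z: "z \<in> range (\<lambda>t. L (\<gamma> t) + (- L A - 1))" for z
  proof -
    obtain t where "z = L (\<gamma> t) + (- L A - 1)"
      using z by blast
    then have "z + 1 = L (\<gamma> t - A)"
      by (simp add: linear_diff[OF L(1)] algebra_simps)
    then show ?thesis
      by (simp add: L(3))
  qed
  define P where "P = M (m - of_real r + 1) + A"
  have "P \<in> range \<gamma>" "P + of_real r * (B - A) \<in> range \<gamma>" "P + of_real r * (C - A) \<in> range \<gamma>"
    using from_normalised[OF on(1)] from_normalised[OF on(2)] from_normalised[OF on(3)]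
    unfolding P_def M_def triangle_map_vertices by (simp_all add: add_ac)
  with r show thesis
    by (rule that)
qed

theorem mainTheorem1:
  fixes \<Gamma> :: "complex set" and A B C :: complex
  assumes "jordan_C1_curve \<Gamma>"
    and "\<not> collinear {A, B, C}"
  shows "\<exists>v c r. r > 0 \<and>
           homothety c r (translation v A) \<in> \<Gamma> \<and>
           homothety c r (translation v B) \<in> \<Gamma> \<and>
           homothety c r (translation v C) \<in> \<Gamma>"
proof -
  obtain \<gamma> \<gamma>' where \<gamma>: "jcurve \<gamma> \<gamma>'" and \<Gamma>: "\<Gamma> = range \<gamma>"
    using assms(1) by (rule jordan_C1_curve_jcurve)
  obtain P r where r: "0 < r" and on: "P \<in> range \<gamma>" "P + of_real r * (B - A) \<in> range \<gamma>"
    "P + of_real r * (C - A) \<in> range \<gamma>"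
    by (rule inscribed_copy_of_triangle[OF \<gamma> assms(2)])
  define v where "v = (P - of_real r * A) / of_real r"
  have "of_real r * v = P - of_real r * A"
    using r by (simp add: v_def)
  then have hom: "homothety 0 r (translation v X) = P + of_real r * (X - A)" for X
    unfolding homothety_def translation_def by (simp add: algebra_simps)
  have "homothety 0 r (translation v A) \<in> \<Gamma>" "homothety 0 r (translation v B) \<in> \<Gamma>"
    "homothety 0 r (translation v C) \<in> \<Gamma>"
    using on unfolding \<Gamma> hom by simp_all
  then show ?thesis
    using r by blast
qed

end
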